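(* Let $K$ be a field, $V$ an infinite dimensional $K$-vector space with countable basis, $R:=\mathrm{End}_K(V)$, $\mathcal C:=\{\varphi\in R\mid\dim_K\mathrm{im}(\varphi)<\infty\}$ and $\mathcal F:=\{\varphi\in R\mid \dim_K\ker(\varphi)<\infty,\ \dim_K\mathrm{coker}(\varphi)<\infty\}$. Then: (1) $\mathrm{Ass}_l(R)=\mathrm{Ass}_r(R)=\mathrm{Ass}(R)=\{0,\mathcal C\}$; (2) $S_{l,0}(R)=S_{r,0}(R)=S_0(R)=\mathrm{Aut}_K(V)$ and $Q_l(R)=Q_r(R)=Q(R)=R$; (3) $S_{l,\mathcal C}(R)=S_{r,\mathcal C}(R)=S_{\mathcal C}(R)=\mathcal F$ and $Q_{l,\mathcal C}(R)=Q_{r,\mathcal C}(R)=Q_{\mathcal C}(R)=R/\mathcal C$; (4) $\mathrm{maxAss}_l(R)=\mathrm{maxAss}_r(R)=\mathrm{maxAss}(R)=\{\mathcal C\}$; (5) $R/\mathcal C$ is a localization maximal ring and a left (resp. right; left and right) localization maximal ring.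
   Context: Rings are associative with $1$. A multiplicatively closed subset $S$ ($1\in S$, $0\notin S$) is a left Ore set if $Sr\cap Rs\ne\emptyset$ for all $r,s$ ($s\in S$); a left denominator set if moreover $rs=0$ ($s\in S$) implies $tr=0$ for some $t\in S$; right Ore/right denominator sets are defined symmetrically; a denominator set is one that is both a left and a right denominator set. For a left (resp. right) denominator set $S$, $\mathrm{ass}_l(S)=\{r\mid sr=0\text{ some }s\in S\}$ (resp. $\mathrm{ass}_r(S)=\{r\mid rs=0\text{ some }s\in S\}$); for a denominator set these coincide, $\mathrm{ass}(S)$. $\mathrm{Ass}_l(R)$, $\mathrm{Ass}_r(R)$, $\mathrm{Ass}(R)$ are the sets of ideals $\mathrm{ass}$ of left denominator sets, right denominator sets, denominator sets respectively, and $\mathrm{maxAss}_l,\mathrm{maxAss}_r,\mathrm{maxAss}$ their sets of maximal elements under inclusion. For an ideal $\mathfrak a$ in the relevant set, $S_{l,\mathfrak a}(R)$ (resp. $S_{r,\mathfrak a}(R)$, $S_{\mathfrak a}(R)$) is the largest left denominator set (resp. right denominator set, denominator set) $S$ with $\mathrm{ass}(S)=\mathfrak a$ (they exist), and $Q_{l,\mathfrak a}(R)=S_{l,\mathfrak a}(R)^{-1}R$, $Q_{r,\mathfrak a}(R)=RS_{r,\mathfrak a}(R)^{-1}$, $Q_{\mathfrak a}(R)=S_{\mathfrak a}(R)^{-1}R$; for $\mathfrak a=0$ write $S_{l,0},Q_l$, $S_{r,0},Q_r$, $S_0,Q$. A ring $A$ is left (resp. right) localization maximal if $Q_l(A)=A$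 and $\mathrm{Ass}_l(A)=\{0\}$ (resp. $Q_r(A)=A$, $\mathrm{Ass}_r(A)=\{0\}$); left and right localization maximal if both hold; localization maximal if $Q(A)=A$ and $\mathrm{Ass}(A)=\{0\}$. *)

theory Defs
  imports Complex_Main "HOL-Library.Countable_Set" "HOL-Algebra.QuotRing"
begin

definition mult_closed :: "('a,'b) ring_scheme \<Rightarrow> 'a set \<Rightarrow> bool" where
  "mult_closed R S \<longleftrightarrow> S \<subseteq> carrier R \<and> \<one>\<^bsub>R\<^esub> \<in> S \<and> \<zero>\<^bsub>R\<^esub> \<notin> S \<and>
     (\<forall>s\<in>S. \<forall>t\<in>S. s \<otimes>\<^bsub>R\<^esub> t \<in> S)"

definition left_ore :: "('a,'b) ring_scheme \<Rightarrow> 'a set \<Rightarrow> bool" where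
  "left_ore R S \<longleftrightarrow> mult_closed R S \<and>
     (\<forall>r\<in>carrier R. \<forall>s\<in>S. \<exists>s'\<in>S. \<exists>r'\<in>carrier R. s' \<otimes>\<^bsub>R\<^esub> r = r' \<otimes>\<^bsub>R\<^esub> s)"

definition right_ore :: "('a,'b) ring_scheme \<Rightarrow> 'a set \<Rightarrow> bool" where
  "right_ore R S \<longleftrightarrow> mult_closed R S \<and>
     (\<forall>r\<in>carrier R. \<forall>s\<in>S. \<exists>s'\<in>S. \<exists>r'\<in>carrier R. r \<otimes>\<^bsub>R\<^esub> s' = s \<otimes>\<^bsub>R\<^esub> r')"

definition left_denom :: "('a,'b) ring_scheme \<Rightarrow> 'a set \<Rightarrow> bool" where
  "left_denom R S \<longleftrightarrow> left_ore R S \<and>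
     (\<forall>r\<in>carrier R. \<forall>s\<in>S. r \<otimes>\<^bsub>R\<^esub> s = \<zero>\<^bsub>R\<^esub> \<longrightarrow> (\<exists>t\<in>S. t \<otimes>\<^bsub>R\<^esub> r = \<zero>\<^bsub>R\<^esub>))"

definition right_denom :: "('a,'b) ring_scheme \<Rightarrow> 'a set \<Rightarrow> bool" where
  "right_denom R S \<longleftrightarrow> right_ore R S \<and>
     (\<forall>r\<in>carrier R. \<forall>s\<in>S. s \<otimes>\<^bsub>R\<^esub> r = \<zero>\<^bsub>R\<^esub> \<longrightarrow> (\<exists>t\<in>S. r \<otimes>\<^bsub>R\<^esub> t = \<zero>\<^bsub>R\<^esub>))"

definition denom :: "('a,'b) ring_scheme \<Rightarrow> 'a set \<Rightarrow> bool" where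
  "denom R S \<longleftrightarrow> left_denom R S \<and> right_denom R S"

definition ass_l :: "('a,'b) ring_scheme \<Rightarrow> 'a set \<Rightarrow> 'a set" where
  "ass_l R S = {r \<in> carrier R. \<exists>s\<in>S. s \<otimes>\<^bsub>R\<^esub> r = \<zero>\<^bsub>R\<^esub>}"

definition ass_r :: "('a,'b) ring_scheme \<Rightarrow> 'a set \<Rightarrow> 'a set" where
  "ass_r R S = {r \<in> carrier R. \<exists>s\<in>S. r \<otimes>\<^bsub>R\<^esub> s = \<zero>\<^bsub>R\<^esub>}"

text \<open>For a denominator set, ass_l and ass_r coincide; ass is their common value.\<close>
definition ass :: "('a,'b) ring_scheme \<Rightarrow> 'a set \<Rightarrow> 'a set" where
  "ass R S = ass_l R S"

definition Ass_l :: "('a,'b) ring_scheme \<Rightarrow> 'a set set" where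
  "Ass_l R = {ass_l R S | S. left_denom R S}"
definition Ass_r :: "('a,'b) ring_scheme \<Rightarrow> 'a set set" where
  "Ass_r R = {ass_r R S | S. right_denom R S}"
definition Ass :: "('a,'b) ring_scheme \<Rightarrow> 'a set set" where
  "Ass R = {ass R S | S. denom R S}"

definition maximals :: "'a set set \<Rightarrow> 'a set set" where
  "maximals X = {a \<in> X. \<forall>b\<in>X. a \<subseteq> b \<longrightarrow> b = a}"

definition maxAss_l :: "('a,'b) ring_scheme \<Rightarrow> 'a set set" where
  "maxAss_l R = maximals (Ass_l R)"
definition maxAss_r :: "('a,'b) ring_scheme \<Rightarrow> 'a set set" where
  "maxAss_r R = maximals (Ass_r R)"
definition maxAss :: "('a,'b) ring_scheme \<Rightarrow> 'a set set" where
  "maxAss R = maximals (Ass R)"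

definition S_l :: "('a,'b) ring_scheme \<Rightarrow> 'a set \<Rightarrow> 'a set" where
  "S_l R a = (THE S. left_denom R S \<and> ass_l R S = a \<and>
                 (\<forall>T. left_denom R T \<and> ass_l R T = a \<longrightarrow> T \<subseteq> S))"
definition S_r :: "('a,'b) ring_scheme \<Rightarrow> 'a set \<Rightarrow> 'a set" where
  "S_r R a = (THE S. right_denom R S \<and> ass_r R S = a \<and>
                 (\<forall>T. right_denom R T \<and> ass_r R T = a \<longrightarrow> T \<subseteq> S))"
definition S_d :: "('a,'b) ring_scheme \<Rightarrow> 'a set \<Rightarrow> 'a set" where
  "S_d R a = (THE S. denom R S \<and> ass R S = a \<and>
                 (\<forall>T. denom R T \<and> ass R T = a \<longrightarrow> T \<subseteq> S))"

text \<open>(Q, sigma) is (a model of) the left ring of fractions S^{-1}R: sigma is a ring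
  homomorphism sending S to units, with kernel ass_l(S), and every element of Q has the
  form sigma(s)^{-1} sigma(r).  This determines S^{-1}R uniquely up to isomorphism over R.\<close>
definition left_localization ::
  "('a,'b) ring_scheme \<Rightarrow> 'a set \<Rightarrow> ('c,'d) ring_scheme \<Rightarrow> ('a \<Rightarrow> 'c) \<Rightarrow> bool" where
  "left_localization R S Q \<sigma> \<longleftrightarrow> ring Q \<and> \<sigma> \<in> ring_hom R Q \<and>
     (\<forall>s\<in>S. \<sigma> s \<in> Units Q) \<and>
     {r \<in> carrier R. \<sigma> r = \<zero>\<^bsub>Q\<^esub>} = ass_l R S \<and>
     (\<forall>q\<in>carrier Q. \<exists>s\<in>S. \<exists>r\<in>carrier R. q = inv\<^bsub>Q\<^esub> (\<sigma> s) \<otimes>\<^bsub>Q\<^esub> \<sigma> r)"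

definition right_localization ::
  "('a,'b) ring_scheme \<Rightarrow> 'a set \<Rightarrow> ('c,'d) ring_scheme \<Rightarrow> ('a \<Rightarrow> 'c) \<Rightarrow> bool" where
  "right_localization R S Q \<sigma> \<longleftrightarrow> ring Q \<and> \<sigma> \<in> ring_hom R Q \<and>
     (\<forall>s\<in>S. \<sigma> s \<in> Units Q) \<and>
     {r \<in> carrier R. \<sigma> r = \<zero>\<^bsub>Q\<^esub>} = ass_r R S \<and>
     (\<forall>q\<in>carrier Q. \<exists>s\<in>S. \<exists>r\<in>carrier R. q = \<sigma> r \<otimes>\<^bsub>Q\<^esub> inv\<^bsub>Q\<^esub> (\<sigma> s))"

text \<open>For a denominator set S, Q_a(R) = S^{-1}R.\<close>
definition localization ::
  "('a,'b) ring_scheme \<Rightarrow> 'a set \<Rightarrow> ('c,'d) ring_scheme \<Rightarrow> ('a \<Rightarrow> 'c) \<Rightarrow> bool" where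
  "localization R S Q \<sigma> \<longleftrightarrow> left_localization R S Q \<sigma>"

text \<open>Localization maximal rings: Q(A) = A means the canonical map A -> Q(A) is an
  isomorphism, i.e. the identity A -> A is a ring of fractions of A at S_0(A).\<close>
definition left_loc_max :: "('a,'b) ring_scheme \<Rightarrow> bool" where
  "left_loc_max A \<longleftrightarrow> left_localization A (S_l A {\<zero>\<^bsub>A\<^esub>}) A (\<lambda>x. x) \<and> Ass_l A = {{\<zero>\<^bsub>A\<^esub>}}"
definition right_loc_max :: "('a,'b) ring_scheme \<Rightarrow> bool" where
  "right_loc_max A \<longleftrightarrow> right_localization A (S_r A {\<zero>\<^bsub>A\<^esub>}) A (\<lambda>x. x) \<and> Ass_r A = {{\<zero>\<^bsub>A\<^esub>}}"
definition loc_max :: "('a,'b) ring_scheme \<Rightarrow> bool" where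
  "loc_max A \<longleftrightarrow> localization A (S_d A {\<zero>\<^bsub>A\<^esub>}) A (\<lambda>x. x) \<and> Ass A = {{\<zero>\<^bsub>A\<^esub>}}"

definition End_ring :: "('k::field \<Rightarrow> 'v::ab_group_add \<Rightarrow> 'v) \<Rightarrow> ('v \<Rightarrow> 'v) ring" where
  "End_ring scale = \<lparr> carrier = {f. Vector_Spaces.linear scale scale f},
      mult = (\<lambda>f g. f \<circ> g), one = (\<lambda>x. x),
      zero = (\<lambda>x. 0), add = (\<lambda>f g x. f x + g x) \<rparr>"

definition fin_dim :: "('k::field \<Rightarrow> 'v::ab_group_add \<Rightarrow> 'v) \<Rightarrow> 'v set \<Rightarrow> bool" where
  "fin_dim scale W \<longleftrightarrow> (\<exists>B. finite B \<and> module.span scale B = W)"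

text \<open>A subspace W has finite codimension (dim V/W finite) iff W plus a finite set spans V.\<close>
definition fin_codim :: "('k::field \<Rightarrow> 'v::ab_group_add \<Rightarrow> 'v) \<Rightarrow> 'v set \<Rightarrow> bool" where
  "fin_codim scale W \<longleftrightarrow> (\<exists>B. finite B \<and> module.span scale (W \<union> B) = UNIV)"

definition finrank_ideal :: "('k::field \<Rightarrow> 'v::ab_group_add \<Rightarrow> 'v) \<Rightarrow> ('v \<Rightarrow> 'v) set" where
  "finrank_ideal scale = {\<phi> \<in> carrier (End_ring scale). fin_dim scale (range \<phi>)}"

definition fredholm_set :: "('k::field \<Rightarrow> 'v::ab_group_add \<Rightarrow> 'v) \<Rightarrow> ('v \<Rightarrow> 'v) set" where
  "fredholm_set scale = {\<phi> \<in> carrier (End_ring scale).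
      fin_dim scale {x. \<phi> x = 0} \<and> fin_codim scale (range \<phi>)}"

definition Aut :: "('k::field \<Rightarrow> 'v::ab_group_add \<Rightarrow> 'v) \<Rightarrow> ('v \<Rightarrow> 'v) set" where
  "Aut scale = {\<phi>. Vector_Spaces.linear scale scale \<phi> \<and> bij \<phi>}"

end

theory Submission
  imports Defs
begin

text \<open>
  The elements of a left or right denominator set \<open>T\<close> are regular modulo \<open>ass T\<close>, which is a
  proper two-sided ideal. Conversely, let \<open>h : R \<rightarrow> S\<close> be surjective such that every element of
  the kernel is killed on both sides by elements of the preimage \<open>D\<close> of the units of \<open>S\<close>, and
  every element regular modulo the kernel lies in \<open>D\<close>. Then \<open>D\<close> is the largest (left, right)
  denominator set whose ass is the kernel, and \<open>S\<close> is its ring of fractions.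

  In \<open>End(V)\<close>, for \<open>V\<close> of countably infinite dimension, the proper ideals are \<open>0\<close> and the
  finite-rank maps \<open>C\<close>: a nonzero ideal contains every map of rank one, hence \<open>C\<close>, and a map of
  infinite rank can be sandwiched to the identity, since its range contains an independent
  family indexed by a basis. The criterion applies to the identity of \<open>End(V)\<close>, whose units
  are the automorphisms, and to \<open>End(V) \<rightarrow> End(V)/C\<close>, where the preimage of the units is the set
  of Fredholm maps: a Fredholm map is invertible modulo \<open>C\<close>, and a map regular modulo \<open>C\<close> has
  finite-dimensional kernel and cokernel, witnessed by the projections onto them. The same
  sandwiching makes \<open>End(V)/C\<close> simple with all regular elements invertible, so it is
  localization maximal.
\<close>

section \<open>Regularity modulo an ideal and denominator sets\<close>

definition regular_mod :: "('a, 'b) ring_scheme \<Rightarrow> 'a set \<Rightarrow> 'a \<Rightarrow> bool" where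
  "regular_mod R I t \<longleftrightarrow> t \<in> carrier R \<and>
     (\<forall>r\<in>carrier R. t \<otimes>\<^bsub>R\<^esub> r = \<zero>\<^bsub>R\<^esub> \<longrightarrow> r \<in> I) \<and>
     (\<forall>r\<in>carrier R. r \<otimes>\<^bsub>R\<^esub> t = \<zero>\<^bsub>R\<^esub> \<longrightarrow> r \<in> I)"

lemma left_denom_mult_closed: "left_denom R S \<Longrightarrow> mult_closed R S"
  unfolding left_denom_def left_ore_def by blast

lemma right_denom_mult_closed: "right_denom R S \<Longrightarrow> mult_closed R S"
  unfolding right_denom_def right_ore_def by blast

lemma left_denom_regular_mod: "left_denom R T \<Longrightarrow> t \<in> T \<Longrightarrow> regular_mod R (ass_l R T) t"
  unfolding left_denom_def left_ore_def mult_closed_def regular_mod_def ass_l_def by blast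

lemma right_denom_regular_mod: "right_denom R T \<Longrightarrow> t \<in> T \<Longrightarrow> regular_mod R (ass_r R T) t"
  unfolding right_denom_def right_ore_def mult_closed_def regular_mod_def ass_r_def by blast

lemma S_l_eqI:
  assumes D: "left_denom R D" "ass_l R D = I" and regular: "\<And>t. regular_mod R I t \<Longrightarrow> t \<in> D"
  shows "S_l R I = D"
proof -
  have largest: "T \<subseteq> D" if "left_denom R T" "ass_l R T = I" for T
    using left_denom_regular_mod[OF that(1)] that(2) regular by blast
  show ?thesis
    unfolding S_l_def by (rule the_equality) (use D largest in \<open>auto intro: subset_antisym\<close>)
qed

lemma S_r_eqI:
  assumes D: "right_denom R D" "ass_r R D = I" and regular: "\<And>t. regular_mod R I t \<Longrightarrow> t \<in> D"
  shows "S_r R I = D"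
proof -
  have largest: "T \<subseteq> D" if "right_denom R T" "ass_r R T = I" for T
    using right_denom_regular_mod[OF that(1)] that(2) regular by blast
  show ?thesis
    unfolding S_r_def by (rule the_equality) (use D largest in \<open>auto intro: subset_antisym\<close>)
qed

lemma S_d_eqI:
  assumes D: "denom R D" "ass R D = I" and regular: "\<And>t. regular_mod R I t \<Longrightarrow> t \<in> D"
  shows "S_d R I = D"
proof -
  have largest: "T \<subseteq> D" if "denom R T" "ass R T = I" for T
    using left_denom_regular_mod[of R T] that regular unfolding denom_def ass_def by blast
  show ?thesis
    unfolding S_d_def by (rule the_equality) (use D largest in \<open>auto intro: subset_antisym\<close>)
qed

context ring
begin

lemma Units_regular_mod_zero:
  assumes u: "u \<in> Units R"
  shows "regular_mod R {\<zero>} u"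
proof -
  have "r = \<zero>" if "r \<in> carrier R" "r \<otimes> u = \<zero>" for r
  proof -
    have "r = r \<otimes> u \<otimes> inv u" using u that(1) by (simp add: m_assoc Units_closed)
    then show ?thesis using u that by simp
  qed
  moreover have "r = \<zero>" if "r \<in> carrier R" "u \<otimes> r = \<zero>" for r
  proof -
    have "r = inv u \<otimes> (u \<otimes> r)" using u that(1) by (simp add: m_assoc[symmetric] Units_closed)
    then show ?thesis using u that by simp
  qed
  ultimately show ?thesis using u unfolding regular_mod_def by blast
qed

lemma ass_l_add_closed:
  assumes T: "left_denom R T" and r1: "r1 \<in> ass_l R T" and r2: "r2 \<in> ass_l R T"
  shows "r1 \<oplus> r2 \<in> ass_l R T"
proof -
  have TR: "T \<subseteq> carrier R" and Tmult: "\<And>s t. s \<in> T \<Longrightarrow> t \<in> T \<Longrightarrow> s \<otimes> t \<in> T"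
    using left_denom_mult_closed[OF T] unfolding mult_closed_def by auto
  obtain t1 where t1: "t1 \<in> T" "t1 \<otimes> r1 = \<zero>" and r1c: "r1 \<in> carrier R"
    using r1 unfolding ass_l_def by blast
  obtain t2 where t2: "t2 \<in> T" "t2 \<otimes> r2 = \<zero>" and r2c: "r2 \<in> carrier R"
    using r2 unfolding ass_l_def by blast
  obtain t' x' where t': "t' \<in> T" "x' \<in> carrier R" "t' \<otimes> t1 = x' \<otimes> t2"
    using T t1(1) t2(1) TR unfolding left_denom_def left_ore_def by blast
  have "(t' \<otimes> t1) \<otimes> (r1 \<oplus> r2) = t' \<otimes> (t1 \<otimes> r1) \<oplus> (t' \<otimes> t1) \<otimes> r2"
    using t'(1) t1(1) r1c r2c TR by (simp add: r_distr m_assoc subsetD)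
  also have "\<dots> = x' \<otimes> (t2 \<otimes> r2)" using t' t1 t2 r2c TR by (simp add: m_assoc subsetD)
  also have "\<dots> = \<zero>" using t2 t'(2) by simp
  finally show ?thesis using Tmult[OF t'(1) t1(1)] r1c r2c unfolding ass_l_def by blast
qed

lemma ideal_ass_l:
  assumes T: "left_denom R T"
  shows "ideal (ass_l R T) R"
proof -
  have TR: "T \<subseteq> carrier R" and T1: "\<one> \<in> T"
    using left_denom_mult_closed[OF T] unfolding mult_closed_def by auto
  have ore: "\<exists>t'\<in>T. \<exists>x'\<in>carrier R. t' \<otimes> x = x' \<otimes> t" if "x \<in> carrier R" "t \<in> T" for x t
    using T that unfolding left_denom_def left_ore_def by blast
  have l_closed: "x \<otimes> r \<in> ass_l R T" if r: "r \<in> ass_l R T" and x: "x \<in> carrier R" for r x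
  proof -
    obtain t where t: "t \<in> T" "t \<otimes> r = \<zero>" and rc: "r \<in> carrier R"
      using r unfolding ass_l_def by blast
    obtain t' x' where t': "t' \<in> T" "x' \<in> carrier R" "t' \<otimes> x = x' \<otimes> t"
      using ore[OF x t(1)] by blast
    have "t' \<otimes> (x \<otimes> r) = x' \<otimes> (t \<otimes> r)"
      using t' t rc x TR by (metis m_assoc subsetD)
    then show ?thesis using t t' rc x TR unfolding ass_l_def by auto
  qed
  have r_closed: "r \<otimes> x \<in> ass_l R T" if r: "r \<in> ass_l R T" and x: "x \<in> carrier R" for r x
  proof -
    obtain t where t: "t \<in> T" "t \<otimes> r = \<zero>" and rc: "r \<in> carrier R"
      using r unfolding ass_l_def by blast
    then have "t \<otimes> (r \<otimes> x) = \<zero>" using x TR by (simp add: m_assoc[symmetric] subsetD)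
    then show ?thesis using t rc x unfolding ass_l_def by auto
  qed
  show ?thesis
  proof (rule idealI[OF ring_axioms])
    show "subgroup (ass_l R T) (add_monoid R)"
    proof (rule add.subgroupI)
      show "ass_l R T \<noteq> {}" using T1 TR unfolding ass_l_def by force
      show "\<ominus> r \<in> ass_l R T" if "r \<in> ass_l R T" for r
        using l_closed[OF that, of "\<ominus> \<one>"] that unfolding ass_l_def by (auto simp: l_minus)
    qed (use ass_l_add_closed[OF T] in \<open>auto simp: ass_l_def\<close>)
  qed (use l_closed r_closed in auto)
qed

lemma ass_r_add_closed:
  assumes T: "right_denom R T" and r1: "r1 \<in> ass_r R T" and r2: "r2 \<in> ass_r R T"
  shows "r1 \<oplus> r2 \<in> ass_r R T"
proof -
  have TR: "T \<subseteq> carrier R" and Tmult: "\<And>s t. s \<in> T \<Longrightarrow> t \<in> T \<Longrightarrow> s \<otimes> t \<in> T"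
    using right_denom_mult_closed[OF T] unfolding mult_closed_def by auto
  obtain t1 where t1: "t1 \<in> T" "r1 \<otimes> t1 = \<zero>" and r1c: "r1 \<in> carrier R"
    using r1 unfolding ass_r_def by blast
  obtain t2 where t2: "t2 \<in> T" "r2 \<otimes> t2 = \<zero>" and r2c: "r2 \<in> carrier R"
    using r2 unfolding ass_r_def by blast
  obtain t' x' where t': "t' \<in> T" "x' \<in> carrier R" "t1 \<otimes> t' = t2 \<otimes> x'"
    using T t1(1) t2(1) TR unfolding right_denom_def right_ore_def by blast
  have "(r1 \<oplus> r2) \<otimes> (t1 \<otimes> t') = (r1 \<otimes> t1) \<otimes> t' \<oplus> r2 \<otimes> (t1 \<otimes> t')"
    using t'(1) t1(1) r1c r2c TR by (simp add: l_distr m_assoc subsetD)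
  also have "\<dots> = r2 \<otimes> (t2 \<otimes> x')" using t' t1 t2 r2c TR by (simp add: subsetD)
  also have "\<dots> = \<zero>" using t2 t'(2) r2c TR by (simp add: m_assoc[symmetric] subsetD)
  finally show ?thesis using Tmult[OF t1(1) t'(1)] r1c r2c unfolding ass_r_def by blast
qed

lemma ideal_ass_r:
  assumes T: "right_denom R T"
  shows "ideal (ass_r R T) R"
proof -
  have TR: "T \<subseteq> carrier R" and T1: "\<one> \<in> T"
    using right_denom_mult_closed[OF T] unfolding mult_closed_def by auto
  have ore: "\<exists>t'\<in>T. \<exists>x'\<in>carrier R. x \<otimes> t' = t \<otimes> x'" if "x \<in> carrier R" "t \<in> T" for x t
    using T that unfolding right_denom_def right_ore_def by blast
  have r_closed: "r \<otimes> x \<in> ass_r R T" if r: "r \<in> ass_r R T" and x: "x \<in> carrier R" for r x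
  proof -
    obtain t where t: "t \<in> T" "r \<otimes> t = \<zero>" and rc: "r \<in> carrier R"
      using r unfolding ass_r_def by blast
    obtain t' x' where t': "t' \<in> T" "x' \<in> carrier R" "x \<otimes> t' = t \<otimes> x'"
      using ore[OF x t(1)] by blast
    have "(r \<otimes> x) \<otimes> t' = (r \<otimes> t) \<otimes> x'"
      using t' t rc x TR by (metis m_assoc subsetD)
    then show ?thesis using t t' rc x TR unfolding ass_r_def by auto
  qed
  have l_closed: "x \<otimes> r \<in> ass_r R T" if r: "r \<in> ass_r R T" and x: "x \<in> carrier R" for r x
  proof -
    obtain t where t: "t \<in> T" "r \<otimes> t = \<zero>" and rc: "r \<in> carrier R"
      using r unfolding ass_r_def by blast
    then have "(x \<otimes> r) \<otimes> t = \<zero>" using x TR by (simp add: m_assoc subsetD)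
    then show ?thesis using t rc x unfolding ass_r_def by auto
  qed
  show ?thesis
  proof (rule idealI[OF ring_axioms])
    show "subgroup (ass_r R T) (add_monoid R)"
    proof (rule add.subgroupI)
      show "ass_r R T \<noteq> {}" using T1 TR unfolding ass_r_def by force
      show "\<ominus> r \<in> ass_r R T" if "r \<in> ass_r R T" for r
        using l_closed[OF that, of "\<ominus> \<one>"] that unfolding ass_r_def by (auto simp: l_minus)
    qed (use ass_r_add_closed[OF T] in \<open>auto simp: ass_r_def\<close>)
  qed (use l_closed r_closed in auto)
qed

lemma one_notin_ass_l:
  assumes "left_denom R T"
  shows "\<one> \<notin> ass_l R T"
proof
  assume "\<one> \<in> ass_l R T"
  then obtain s where s: "s \<in> T" "s \<otimes> \<one> = \<zero>" unfolding ass_l_def by blast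
  have "T \<subseteq> carrier R" "\<zero> \<notin> T"
    using left_denom_mult_closed[OF assms] unfolding mult_closed_def by auto
  then show False using s by (metis subsetD r_one)
qed

lemma one_notin_ass_r:
  assumes "right_denom R T"
  shows "\<one> \<notin> ass_r R T"
proof
  assume "\<one> \<in> ass_r R T"
  then obtain s where s: "s \<in> T" "\<one> \<otimes> s = \<zero>" unfolding ass_r_def by blast
  have "T \<subseteq> carrier R" "\<zero> \<notin> T"
    using right_denom_mult_closed[OF assms] unfolding mult_closed_def by auto
  then show False using s by (metis subsetD l_one)
qed

lemma Ass_l_proper_ideal:
  assumes "I \<in> Ass_l R"
  shows "ideal I R \<and> \<one> \<notin> I"
proof -
  obtain T where "left_denom R T" "I = ass_l R T" using assms unfolding Ass_l_def by blast
  then show ?thesis using ideal_ass_l one_notin_ass_l by simp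
qed

lemma Ass_r_proper_ideal:
  assumes "I \<in> Ass_r R"
  shows "ideal I R \<and> \<one> \<notin> I"
proof -
  obtain T where "right_denom R T" "I = ass_r R T" using assms unfolding Ass_r_def by blast
  then show ?thesis using ideal_ass_r one_notin_ass_r by simp
qed

lemma Ass_proper_ideal:
  assumes "I \<in> Ass R"
  shows "ideal I R \<and> \<one> \<notin> I"
proof -
  obtain T where "left_denom R T" "I = ass_l R T" using assms unfolding Ass_def ass_def denom_def by blast
  then show ?thesis using ideal_ass_l one_notin_ass_l by simp
qed

end

section \<open>Rings of fractions at the preimage of the units\<close>

context ring_hom_ring
begin

lemma regular_mod_kernel:
  assumes f: "f \<in> carrier R" and reg: "regular_mod S {\<zero>\<^bsub>S\<^esub>} (h f)"
  shows "regular_mod R (a_kernel R S h) f"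
proof -
  have "h r = \<zero>\<^bsub>S\<^esub>" if "r \<in> carrier R" "f \<otimes> r = \<zero>" for r
  proof -
    have "h f \<otimes>\<^bsub>S\<^esub> h r = h (f \<otimes> r)" using f that(1) by simp
    then have "h f \<otimes>\<^bsub>S\<^esub> h r = \<zero>\<^bsub>S\<^esub>" using that(2) by simp
    then show ?thesis using reg hom_closed[OF that(1)] unfolding regular_mod_def by blast
  qed
  moreover have "h r = \<zero>\<^bsub>S\<^esub>" if "r \<in> carrier R" "r \<otimes> f = \<zero>" for r
  proof -
    have "h r \<otimes>\<^bsub>S\<^esub> h f = h (r \<otimes> f)" using f that(1) by simp
    then have "h r \<otimes>\<^bsub>S\<^esub> h f = \<zero>\<^bsub>S\<^esub>" using that(2) by simp
    then show ?thesis using reg hom_closed[OF that(1)] unfolding regular_mod_def by blast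
  qed
  ultimately show ?thesis using f unfolding regular_mod_def a_kernel_def' by blast
qed

lemma units_preimage_regular_mod:
  "s \<in> carrier R \<Longrightarrow> h s \<in> Units S \<Longrightarrow> regular_mod R (a_kernel R S h) s"
  using regular_mod_kernel S.Units_regular_mod_zero by blast

lemma units_preimage_mult_closed:
  assumes "\<one>\<^bsub>S\<^esub> \<noteq> \<zero>\<^bsub>S\<^esub>"
  shows "mult_closed R {s \<in> carrier R. h s \<in> Units S}"
  unfolding mult_closed_def
proof (intro conjI ballI)
  show "\<zero> \<notin> {s \<in> carrier R. h s \<in> Units S}"
  proof
    assume "\<zero> \<in> {s \<in> carrier R. h s \<in> Units S}"
    then have zero: "\<zero>\<^bsub>S\<^esub> \<in> Units S" by simp
    then have "\<one>\<^bsub>S\<^esub> = inv\<^bsub>S\<^esub> \<zero>\<^bsub>S\<^esub> \<otimes>\<^bsub>S\<^esub> \<zero>\<^bsub>S\<^esub>" by (rule S.Units_l_inv[symmetric])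
    also have "\<dots> = \<zero>\<^bsub>S\<^esub>" using zero by (simp add: S.Units_closed)
    finally show False using assms by simp
  qed
  fix s t assume "s \<in> {s \<in> carrier R. h s \<in> Units S}" "t \<in> {s \<in> carrier R. h s \<in> Units S}"
  then show "s \<otimes> t \<in> {s \<in> carrier R. h s \<in> Units S}"
    using S.Units_m_closed by simp
qed auto

text \<open>The Ore conditions come from lifting \<open>h r \<otimes> inv (h s) \<otimes> h s = h r\<close> to \<open>R\<close> and
  killing the error term, which lies in the kernel, by an element of the preimage.\<close>

lemma units_preimage_left_ore:
  assumes D: "D = {s \<in> carrier R. h s \<in> Units S}"
    and surj: "h ` carrier R = carrier S" and nontrivial: "\<one>\<^bsub>S\<^esub> \<noteq> \<zero>\<^bsub>S\<^esub>"
    and left_ann: "\<And>c. c \<in> a_kernel R S h \<Longrightarrow> \<exists>t\<in>D. t \<otimes> c = \<zero>"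
  shows "left_ore R D"
  unfolding left_ore_def
proof (intro conjI ballI)
  show "mult_closed R D" using units_preimage_mult_closed[OF nontrivial] D by simp
  fix r s assume r: "r \<in> carrier R" and s: "s \<in> D"
  then have sc: "s \<in> carrier R" and su: "h s \<in> Units S" using D by auto
  have "inv\<^bsub>S\<^esub> (h s) \<in> h ` carrier R" using surj su by (simp add: S.Units_closed)
  then obtain g where g: "g \<in> carrier R" "h g = inv\<^bsub>S\<^esub> (h s)" by (auto elim!: imageE)
  have "h (r \<otimes> g \<otimes> s) = h r"
    using r g sc su by (simp add: S.m_assoc S.Units_closed)
  then have "r \<ominus> r \<otimes> g \<otimes> s \<in> a_kernel R S h"
    using r g sc su unfolding a_kernel_def' by (simp add: a_minus_def S.r_neg del: hom_mult)
  then obtain t where t: "t \<in> D" "t \<otimes> (r \<ominus> r \<otimes> g \<otimes> s) = \<zero>"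
    using left_ann by blast
  have tc: "t \<in> carrier R" using t D by auto
  have "t \<otimes> r = t \<otimes> (r \<ominus> r \<otimes> g \<otimes> s) \<oplus> (t \<otimes> r \<otimes> g) \<otimes> s"
    using r g sc tc by algebra
  then have "t \<otimes> r = (t \<otimes> r \<otimes> g) \<otimes> s" using t r g sc tc by simp
  then show "\<exists>s'\<in>D. \<exists>r'\<in>carrier R. s' \<otimes> r = r' \<otimes> s"
    using t(1) R.m_closed[OF R.m_closed[OF tc r] g(1)] by blast
qed

lemma units_preimage_right_ore:
  assumes D: "D = {s \<in> carrier R. h s \<in> Units S}"
    and surj: "h ` carrier R = carrier S" and nontrivial: "\<one>\<^bsub>S\<^esub> \<noteq> \<zero>\<^bsub>S\<^esub>"
    and right_ann: "\<And>c. c \<in> a_kernel R S h \<Longrightarrow> \<exists>t\<in>D. c \<otimes> t = \<zero>"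
  shows "right_ore R D"
  unfolding right_ore_def
proof (intro conjI ballI)
  show "mult_closed R D" using units_preimage_mult_closed[OF nontrivial] D by simp
  fix r s assume r: "r \<in> carrier R" and s: "s \<in> D"
  then have sc: "s \<in> carrier R" and su: "h s \<in> Units S" using D by auto
  have "inv\<^bsub>S\<^esub> (h s) \<in> h ` carrier R" using surj su by (simp add: S.Units_closed)
  then obtain g where g: "g \<in> carrier R" "h g = inv\<^bsub>S\<^esub> (h s)" by (auto elim!: imageE)
  have "h (s \<otimes> g \<otimes> r) = h r"
    using r g sc su by (simp add: S.Units_closed)
  then have "r \<ominus> s \<otimes> g \<otimes> r \<in> a_kernel R S h"
    using r g sc su unfolding a_kernel_def' by (simp add: a_minus_def S.r_neg del: hom_mult)
  then obtain t where t: "t \<in> D" "(r \<ominus> s \<otimes> g \<otimes> r) \<otimes> t = \<zero>"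
    using right_ann by blast
  have tc: "t \<in> carrier R" using t D by auto
  have "r \<otimes> t = (r \<ominus> s \<otimes> g \<otimes> r) \<otimes> t \<oplus> s \<otimes> (g \<otimes> r \<otimes> t)"
    using r g sc tc by algebra
  then have "r \<otimes> t = s \<otimes> (g \<otimes> r \<otimes> t)" using t r g sc tc by simp
  then show "\<exists>s'\<in>D. \<exists>r'\<in>carrier R. r \<otimes> s' = s \<otimes> r'"
    using t(1) R.m_closed[OF R.m_closed[OF g(1) r] tc] by blast
qed

lemma units_preimage_denom:
  assumes D: "D = {s \<in> carrier R. h s \<in> Units S}"
    and surj: "h ` carrier R = carrier S" and nontrivial: "\<one>\<^bsub>S\<^esub> \<noteq> \<zero>\<^bsub>S\<^esub>"
    and left_ann: "\<And>c. c \<in> a_kernel R S h \<Longrightarrow> \<exists>t\<in>D. t \<otimes> c = \<zero>"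
    and right_ann: "\<And>c. c \<in> a_kernel R S h \<Longrightarrow> \<exists>t\<in>D. c \<otimes> t = \<zero>"
  shows "denom R D \<and> ass_l R D = a_kernel R S h \<and> ass_r R D = a_kernel R S h"
proof -
  have kill_l: "r \<in> a_kernel R S h" if "t \<in> D" "r \<in> carrier R" "t \<otimes> r = \<zero>" for t r
    using units_preimage_regular_mod[of t] that D unfolding regular_mod_def by blast
  have kill_r: "r \<in> a_kernel R S h" if "t \<in> D" "r \<in> carrier R" "r \<otimes> t = \<zero>" for t r
    using units_preimage_regular_mod[of t] that D unfolding regular_mod_def by blast
  have kernel: "a_kernel R S h \<subseteq> carrier R" unfolding a_kernel_def' by blast
  have "ass_l R D = a_kernel R S h"
    unfolding ass_l_def using kill_l left_ann kernel by blast
  moreover have "ass_r R D = a_kernel R S h"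
    unfolding ass_r_def using kill_r right_ann kernel by blast
  moreover have "left_denom R D"
    unfolding left_denom_def using units_preimage_left_ore[OF D surj nontrivial left_ann] kill_r left_ann
    by blast
  moreover have "right_denom R D"
    unfolding right_denom_def using units_preimage_right_ore[OF D surj nontrivial right_ann] kill_l right_ann
    by blast
  ultimately show ?thesis unfolding denom_def by blast
qed

lemma units_preimage_localization:
  assumes D: "D = {s \<in> carrier R. h s \<in> Units S}" and surj: "h ` carrier R = carrier S"
    and ass_l: "ass_l R D = a_kernel R S h" and ass_r: "ass_r R D = a_kernel R S h"
  shows "left_localization R D S h \<and> right_localization R D S h"
proof -
  have one: "\<one> \<in> D" using D by simp
  have units: "\<forall>s\<in>D. h s \<in> Units S" unfolding D by blast
  have kernel: "{r \<in> carrier R. h r = \<zero>\<^bsub>S\<^esub>} = a_kernel R S h" by (rule a_kernel_def'[symmetric])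
  have fractions: "\<exists>s\<in>D. \<exists>r\<in>carrier R. q = inv\<^bsub>S\<^esub> (h s) \<otimes>\<^bsub>S\<^esub> h r"
    "\<exists>s\<in>D. \<exists>r\<in>carrier R. q = h r \<otimes>\<^bsub>S\<^esub> inv\<^bsub>S\<^esub> (h s)" if q: "q \<in> carrier S" for q
  proof -
    have "q \<in> h ` carrier R" using q surj by simp
    then obtain r where r: "r \<in> carrier R" "q = h r" by blast
    then have "q = inv\<^bsub>S\<^esub> (h \<one>) \<otimes>\<^bsub>S\<^esub> h r" "q = h r \<otimes>\<^bsub>S\<^esub> inv\<^bsub>S\<^esub> (h \<one>)" by simp_all
    then show "\<exists>s\<in>D. \<exists>r\<in>carrier R. q = inv\<^bsub>S\<^esub> (h s) \<otimes>\<^bsub>S\<^esub> h r"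
      "\<exists>s\<in>D. \<exists>r\<in>carrier R. q = h r \<otimes>\<^bsub>S\<^esub> inv\<^bsub>S\<^esub> (h s)"
      using one r(1) by blast+
  qed
  show ?thesis
    unfolding left_localization_def right_localization_def kernel ass_l ass_r
    using S.ring_axioms homh units fractions by blast
qed

lemma largest_denominator_sets_at_kernel:
  assumes D: "D = {s \<in> carrier R. h s \<in> Units S}"
    and surj: "h ` carrier R = carrier S" and nontrivial: "\<one>\<^bsub>S\<^esub> \<noteq> \<zero>\<^bsub>S\<^esub>"
    and left_ann: "\<And>c. c \<in> a_kernel R S h \<Longrightarrow> \<exists>t\<in>D. t \<otimes> c = \<zero>"
    and right_ann: "\<And>c. c \<in> a_kernel R S h \<Longrightarrow> \<exists>t\<in>D. c \<otimes> t = \<zero>"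
    and regular: "\<And>t. regular_mod R (a_kernel R S h) t \<Longrightarrow> t \<in> D"
  shows "a_kernel R S h \<in> Ass_l R \<and> a_kernel R S h \<in> Ass_r R \<and> a_kernel R S h \<in> Ass R \<and>
    S_l R (a_kernel R S h) = D \<and> S_r R (a_kernel R S h) = D \<and> S_d R (a_kernel R S h) = D \<and>
    left_localization R D S h \<and> right_localization R D S h"
proof -
  have denom: "denom R D" and ass_l: "ass_l R D = a_kernel R S h" and ass_r: "ass_r R D = a_kernel R S h"
    using units_preimage_denom[OF D surj nontrivial left_ann right_ann] by auto
  have left: "left_denom R D" and right: "right_denom R D" using denom unfolding denom_def by auto
  have ass: "ass R D = a_kernel R S h" using ass_l unfolding ass_def .
  have "a_kernel R S h \<in> Ass_l R" unfolding Ass_l_def using left ass_l by blast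
  moreover have "a_kernel R S h \<in> Ass_r R" unfolding Ass_r_def using right ass_r by blast
  moreover have "a_kernel R S h \<in> Ass R" unfolding Ass_def using denom ass by blast
  moreover have "S_l R (a_kernel R S h) = D" by (rule S_l_eqI[OF left ass_l regular])
  moreover have "S_r R (a_kernel R S h) = D" by (rule S_r_eqI[OF right ass_r regular])
  moreover have "S_d R (a_kernel R S h) = D" by (rule S_d_eqI[OF denom ass regular])
  ultimately show ?thesis using units_preimage_localization[OF D surj ass_l ass_r] by (intro conjI) simp_all
qed

lemma hom_eq_if_diff_in_kernel:
  assumes "a \<in> carrier R" "b \<in> carrier R" "a \<ominus> b \<in> a_kernel R S h"
  shows "h a = h b"
proof -
  have "(a \<ominus> b) \<oplus> b = a" using assms(1,2) by algebra
  then have "h a = h (a \<ominus> b) \<oplus>\<^bsub>S\<^esub> h b" using hom_add[of "a \<ominus> b" b] assms(1,2) by simp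
  then show ?thesis using assms unfolding a_kernel_def' by simp
qed

lemma image_proper_ideal_trivial:
  assumes surj: "h ` carrier R = carrier S"
    and unit_factor: "\<And>r. r \<in> carrier R \<Longrightarrow> r \<notin> a_kernel R S h \<Longrightarrow>
      \<exists>a\<in>carrier R. \<exists>b\<in>carrier R. a \<otimes> r \<otimes> b = \<one>"
    and J: "ideal J S" "\<one>\<^bsub>S\<^esub> \<notin> J"
  shows "J = {\<zero>\<^bsub>S\<^esub>}"
proof -
  have "\<rho> = \<zero>\<^bsub>S\<^esub>" if \<rho>: "\<rho> \<in> J" for \<rho>
  proof (rule ccontr)
    assume nonzero: "\<rho> \<noteq> \<zero>\<^bsub>S\<^esub>"
    have "\<rho> \<in> h ` carrier R" using ideal.Icarr[OF J(1) \<rho>] surj by simp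
    then obtain r where r: "r \<in> carrier R" "\<rho> = h r" by blast
    then have "r \<notin> a_kernel R S h" using nonzero unfolding a_kernel_def' by blast
    then obtain a b where ab: "a \<in> carrier R" "b \<in> carrier R" "a \<otimes> r \<otimes> b = \<one>"
      using unit_factor r(1) by blast
    have "h a \<otimes>\<^bsub>S\<^esub> \<rho> \<otimes>\<^bsub>S\<^esub> h b \<in> J"
      using ideal.I_r_closed[OF J(1) ideal.I_l_closed[OF J(1) \<rho> hom_closed[OF ab(1)]] hom_closed[OF ab(2)]] .
    moreover have "h a \<otimes>\<^bsub>S\<^esub> \<rho> \<otimes>\<^bsub>S\<^esub> h b = h (a \<otimes> r \<otimes> b)" using ab(1,2) r by simp
    ultimately show False using ab(3) J(2) by simp
  qed
  moreover have "\<zero>\<^bsub>S\<^esub> \<in> J" using additive_subgroup.zero_closed[OF ideal.axioms(1)[OF J(1)]] by simp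
  ultimately show ?thesis by blast
qed

end

context ring
begin

lemma largest_denominator_sets_at_zero:
  assumes nontrivial: "\<one> \<noteq> \<zero>" and regular: "\<And>t. regular_mod R {\<zero>} t \<Longrightarrow> t \<in> Units R"
  shows "{\<zero>} \<in> Ass_l R \<and> {\<zero>} \<in> Ass_r R \<and> {\<zero>} \<in> Ass R \<and>
    S_l R {\<zero>} = Units R \<and> S_r R {\<zero>} = Units R \<and> S_d R {\<zero>} = Units R \<and>
    left_localization R (Units R) R (\<lambda>x. x) \<and> right_localization R (Units R) R (\<lambda>x. x)"
proof -
  have id: "ring_hom_ring R R (\<lambda>x. x)"
    using ring_axioms id_ring_hom[of R] by (intro ring_hom_ringI2) (simp_all add: id_def)
  have kernel: "a_kernel R R (\<lambda>x. x) = {\<zero>}" unfolding a_kernel_def' by auto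
  have units: "Units R = {s \<in> carrier R. s \<in> Units R}" by auto
  have surj: "(\<lambda>x. x) ` carrier R = carrier R" by simp
  have ann: "\<exists>t\<in>Units R. t \<otimes> c = \<zero>" "\<exists>t\<in>Units R. c \<otimes> t = \<zero>"
    if "c \<in> a_kernel R R (\<lambda>x. x)" for c
    using that Units_one_closed unfolding kernel by force+
  from ring_hom_ring.largest_denominator_sets_at_kernel[OF id units surj nontrivial ann regular[unfolded kernel[symmetric]]]
  show ?thesis unfolding kernel .
qed

lemma localization_maximal_if_simple:
  assumes nontrivial: "\<one> \<noteq> \<zero>" and regular: "\<And>t. regular_mod R {\<zero>} t \<Longrightarrow> t \<in> Units R"
    and simple: "\<And>I. ideal I R \<Longrightarrow> \<one> \<notin> I \<Longrightarrow> I = {\<zero>}"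
  shows "loc_max R \<and> left_loc_max R \<and> right_loc_max R"
proof -
  note zero = largest_denominator_sets_at_zero[OF nontrivial regular]
  have "Ass_l R = {{\<zero>}}" "Ass_r R = {{\<zero>}}" "Ass R = {{\<zero>}}"
    using zero simple Ass_l_proper_ideal Ass_r_proper_ideal Ass_proper_ideal by blast+
  then show ?thesis
    using zero unfolding loc_max_def left_loc_max_def right_loc_max_def localization_def by simp
qed

end

context ideal
begin

lemma rcos_kernel: "a_kernel R (R Quot I) ((+>) I) = I"
proof -
  have zero: "\<zero>\<^bsub>R Quot I\<^esub> = I" by (simp add: FactRing_def)
  have "I +> r = I \<longleftrightarrow> r \<in> I" if "r \<in> carrier R" for r
    using rcos_const_imp_mem[OF that] a_rcos_zero[OF is_ideal] by blast
  then show ?thesis unfolding a_kernel_def' zero using a_subset by blast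
qed

lemma rcos_surj: "(+>) I ` carrier R = carrier (R Quot I)"
  unfolding FactRing_def A_RCOSETS_def' by auto

lemma quotient_nontrivial: "\<one> \<notin> I \<Longrightarrow> \<one>\<^bsub>R Quot I\<^esub> \<noteq> \<zero>\<^bsub>R Quot I\<^esub>"
  using rcos_kernel ring_hom_one[OF rcos_ring_hom] unfolding a_kernel_def' by blast

end

section \<open>The endomorphism ring and its finite-rank ideal\<close>

abbreviation linear_endo :: "('k::field \<Rightarrow> 'v::ab_group_add \<Rightarrow> 'v) \<Rightarrow> ('v \<Rightarrow> 'v) \<Rightarrow> bool" where
  "linear_endo scale \<equiv> Vector_Spaces.linear scale scale"

context vector_space
begin

interpretation endo: vector_space_pair scale scale
  by (simp add: vector_space_pair_def vector_space_axioms)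

lemma End_ring_carrier [simp]: "f \<in> carrier (End_ring scale) \<longleftrightarrow> linear_endo scale f"
  by (simp add: End_ring_def)

lemma End_ring_simps [simp]:
  "f \<otimes>\<^bsub>End_ring scale\<^esub> g = f \<circ> g" "\<one>\<^bsub>End_ring scale\<^esub> = (\<lambda>x. x)"
  "\<zero>\<^bsub>End_ring scale\<^esub> = (\<lambda>x. 0)" "f \<oplus>\<^bsub>End_ring scale\<^esub> g = (\<lambda>x. f x + g x)"
  by (simp_all add: End_ring_def)

lemma linear_endo_ident: "linear_endo scale (\<lambda>x. x)"
  by (rule linear_ident)

lemma linear_endo_comp: "linear_endo scale f \<Longrightarrow> linear_endo scale g \<Longrightarrow> linear_endo scale (f \<circ> g)"
  using Vector_Spaces.linear_compose[of scale scale g scale f] by simp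

lemma linear_endo_add: "linear_endo scale f \<Longrightarrow> linear_endo scale g \<Longrightarrow> linear_endo scale (\<lambda>x. f x + g x)"
  by (rule endo.linear_compose_add)

lemma linear_endo_diff: "linear_endo scale f \<Longrightarrow> linear_endo scale g \<Longrightarrow> linear_endo scale (\<lambda>x. f x - g x)"
  by (rule endo.linear_compose_sub)

lemma linear_endo_neg: "linear_endo scale f \<Longrightarrow> linear_endo scale (\<lambda>x. - f x)"
  by (rule endo.linear_compose_neg)

lemma linear_endo_zero: "linear_endo scale (\<lambda>x. 0)"
  by (rule endo.linear_zero)

lemma ring_End_ring: "ring (End_ring scale)"
proof (rule ringI)
  show "abelian_group (End_ring scale)"
  proof (rule abelian_groupI)
    fix f assume "f \<in> carrier (End_ring scale)"
    then show "\<exists>g\<in>carrier (End_ring scale). g \<oplus>\<^bsub>End_ring scale\<^esub> f = \<zero>\<^bsub>End_ring scale\<^esub>"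
      by (intro bexI[of _ "\<lambda>x. - f x"]) (auto simp: linear_endo_neg)
  qed (auto simp: linear_endo_add linear_endo_zero add.assoc add.commute)
  show "monoid (End_ring scale)"
    by (rule monoidI) (auto simp: linear_endo_comp linear_endo_ident)
  fix f g k
  assume "f \<in> carrier (End_ring scale)" "g \<in> carrier (End_ring scale)" "k \<in> carrier (End_ring scale)"
  then show "(f \<oplus>\<^bsub>End_ring scale\<^esub> g) \<otimes>\<^bsub>End_ring scale\<^esub> k =
      f \<otimes>\<^bsub>End_ring scale\<^esub> k \<oplus>\<^bsub>End_ring scale\<^esub> g \<otimes>\<^bsub>End_ring scale\<^esub> k"
    "k \<otimes>\<^bsub>End_ring scale\<^esub> (f \<oplus>\<^bsub>End_ring scale\<^esub> g) =
      k \<otimes>\<^bsub>End_ring scale\<^esub> f \<oplus>\<^bsub>End_ring scale\<^esub> k \<otimes>\<^bsub>End_ring scale\<^esub> g"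
    by (auto simp: fun_eq_iff endo.linear_add)
qed

lemma End_ring_a_inv: "linear_endo scale f \<Longrightarrow> \<ominus>\<^bsub>End_ring scale\<^esub> f = (\<lambda>x. - f x)"
  by (rule abelian_group.minus_equality[OF ring.is_abelian_group[OF ring_End_ring]])
    (auto simp: linear_endo_neg)

lemma End_ring_minus:
  "linear_endo scale f \<Longrightarrow> linear_endo scale g \<Longrightarrow> f \<ominus>\<^bsub>End_ring scale\<^esub> g = (\<lambda>x. f x - g x)"
  by (simp add: a_minus_def End_ring_a_inv)

lemma Units_End_ring: "Units (End_ring scale) = Aut scale"
proof
  show "Units (End_ring scale) \<subseteq> Aut scale"
  proof
    fix f assume "f \<in> Units (End_ring scale)"
    then obtain g where "linear_endo scale f" "g \<circ> f = (\<lambda>x. x)" "f \<circ> g = (\<lambda>x. x)"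
      unfolding Units_def by auto
    then show "f \<in> Aut scale" unfolding Aut_def by (auto intro!: o_bij[of g f] simp: id_def)
  qed
  show "Aut scale \<subseteq> Units (End_ring scale)"
  proof
    fix f assume "f \<in> Aut scale"
    then have f: "linear_endo scale f" "bij f" unfolding Aut_def by auto
    then have "linear_endo scale (inv_into UNIV f)"
      using bij_module_hom_imp_inv_module_hom[of scale scale f] by (simp add: module_hom_iff_linear)
    then show "f \<in> Units (End_ring scale)" unfolding Units_def using f
      by (auto simp: fun_eq_iff bij_is_inj bij_is_surj surj_f_inv_f intro!: bexI[of _ "inv_into UNIV f"])
  qed
qed

lemma fin_dim_span: "finite D \<Longrightarrow> fin_dim scale (span D)"
  unfolding fin_dim_def by blast

lemma finite_independent_in_fin_dim:
  assumes "fin_dim scale W" "B \<subseteq> W" "independent B"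
  shows "finite B"
proof -
  obtain D where "finite D" "span D = W" using assms(1) unfolding fin_dim_def by blast
  then show ?thesis using independent_span_bound[of D B] assms(2,3) by blast
qed

lemma fin_dim_subspace:
  assumes "fin_dim scale W'" "subspace W" "W \<subseteq> W'"
  shows "fin_dim scale W"
proof -
  obtain B where B: "B \<subseteq> W" "independent B" "W \<subseteq> span B"
    using maximal_independent_subset[of W] by blast
  have "finite B" using finite_independent_in_fin_dim[OF assms(1) _ B(2)] B(1) assms(3) by blast
  moreover have "span B = W" using B span_minimal[OF B(1) assms(2)] by blast
  ultimately show ?thesis unfolding fin_dim_def by blast
qed

lemma fin_dim_image:
  assumes "linear_endo scale f" "fin_dim scale W"
  shows "fin_dim scale (f ` W)"
proof -
  obtain D where "finite D" "span D = W" using assms(2) unfolding fin_dim_def by blast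
  then show ?thesis
    using endo.linear_span_image[OF assms(1), of D] unfolding fin_dim_def by auto
qed

lemma subspace_range: "linear_endo scale f \<Longrightarrow> subspace (range f)"
  using endo.linear_subspace_image[of f UNIV] by simp

lemma subspace_kernel: "linear_endo scale f \<Longrightarrow> subspace {x. f x = 0}"
  by (rule endo.linear_subspace_kernel)

lemma exists_projection:
  assumes "subspace W"
  obtains P where "linear_endo scale P" "range P = W" "\<And>x. x \<in> W \<Longrightarrow> P x = x"
proof -
  have "\<exists>P. range P \<subseteq> W \<and> linear_endo scale P \<and> (\<forall>x\<in>W. P (id x) = x)"
    by (rule endo.linear_exists_left_inverse_on[OF linear_id assms]) simp
  then obtain P where P: "range P \<subseteq> W" "linear_endo scale P" "\<And>x. x \<in> W \<Longrightarrow> P x = x"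
    by auto
  have "W \<subseteq> range P"
  proof
    fix x assume "x \<in> W"
    then have "x = P x" using P(3) by simp
    then show "x \<in> range P" by (rule range_eqI)
  qed
  then show ?thesis using that P by blast
qed

lemma finrank_ideal_iff: "f \<in> finrank_ideal scale \<longleftrightarrow> linear_endo scale f \<and> fin_dim scale (range f)"
  unfolding finrank_ideal_def by simp

lemma finrank_comp_left:
  "f \<in> finrank_ideal scale \<Longrightarrow> linear_endo scale a \<Longrightarrow> a \<circ> f \<in> finrank_ideal scale"
  unfolding finrank_ideal_iff using fin_dim_image[of a "range f"] linear_endo_comp
  by (auto simp: image_comp)

lemma finrank_comp_right:
  assumes "f \<in> finrank_ideal scale" "linear_endo scale a"
  shows "f \<circ> a \<in> finrank_ideal scale"
proof -
  have "linear_endo scale (f \<circ> a)" using assms linear_endo_comp unfolding finrank_ideal_iff by blast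
  moreover have "range (f \<circ> a) \<subseteq> range f" by auto
  ultimately show ?thesis
    using fin_dim_subspace[of "range f" "range (f \<circ> a)"] subspace_range assms(1)
    unfolding finrank_ideal_iff by blast
qed

lemma finrank_add:
  assumes "f \<in> finrank_ideal scale" "g \<in> finrank_ideal scale"
  shows "(\<lambda>x. f x + g x) \<in> finrank_ideal scale"
proof -
  obtain D1 D2 where D: "finite D1" "span D1 = range f" "finite D2" "span D2 = range g"
    using assms unfolding finrank_ideal_iff fin_dim_def by metis
  have lin: "linear_endo scale (\<lambda>x. f x + g x)"
    using assms linear_endo_add unfolding finrank_ideal_iff by blast
  have "range (\<lambda>x. f x + g x) \<subseteq> span (D1 \<union> D2)"
    using D span_mono[of D1 "D1 \<union> D2"] span_mono[of D2 "D1 \<union> D2"] by (auto intro!: span_add)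
  then show ?thesis
    using fin_dim_subspace[OF fin_dim_span subspace_range[OF lin]] D lin
    unfolding finrank_ideal_iff by blast
qed

lemma finrank_neg: "f \<in> finrank_ideal scale \<Longrightarrow> (\<lambda>x. - f x) \<in> finrank_ideal scale"
  using finrank_comp_left[of f "\<lambda>x. - x"] linear_endo_neg[OF linear_endo_ident] by (simp add: comp_def)

lemma finrank_zero: "(\<lambda>x. 0) \<in> finrank_ideal scale"
  using fin_dim_span[of "{}"] linear_endo_zero unfolding finrank_ideal_iff by simp

lemma ideal_finrank_ideal: "ideal (finrank_ideal scale) (End_ring scale)"
proof (rule idealI[OF ring_End_ring])
  interpret End: ring "End_ring scale" by (rule ring_End_ring)
  have neg: "\<ominus>\<^bsub>End_ring scale\<^esub> f \<in> finrank_ideal scale" if f: "f \<in> finrank_ideal scale" for f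
  proof -
    have "linear_endo scale f" using f finrank_ideal_iff by blast
    then show ?thesis using finrank_neg[OF f] End_ring_a_inv by simp
  qed
  show "subgroup (finrank_ideal scale) (add_monoid (End_ring scale))"
  proof (rule End.add.subgroupI)
    show "finrank_ideal scale \<subseteq> carrier (End_ring scale)" by (auto simp: finrank_ideal_iff)
    show "finrank_ideal scale \<noteq> {}" using finrank_zero by blast
  qed (simp_all add: neg finrank_add)
qed (simp_all add: finrank_comp_left finrank_comp_right)

lemma exists_nonzero_if_not_fin_dim:
  assumes "\<not> fin_dim scale UNIV"
  obtains v :: 'b where "v \<noteq> 0"
proof -
  have "UNIV \<noteq> span ({} :: 'b set)" using assms fin_dim_span[of "{}"] by auto
  then show ?thesis using that by auto
qed

lemma one_notin_finrank_ideal: "\<not> fin_dim scale UNIV \<Longrightarrow> (\<lambda>x. x) \<notin> finrank_ideal scale"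
  unfolding finrank_ideal_iff by simp

lemma finrank_ideal_nonzero:
  assumes "\<not> fin_dim scale UNIV"
  shows "finrank_ideal scale \<noteq> {\<lambda>x. 0}"
proof -
  obtain v :: 'b where v: "v \<noteq> 0" using exists_nonzero_if_not_fin_dim[OF assms] .
  obtain P where P: "linear_endo scale P" "range P = span {v}" "\<And>x. x \<in> span {v} \<Longrightarrow> P x = x"
    using exists_projection[OF subspace_span] by blast
  have "P \<in> finrank_ideal scale" using P(1,2) fin_dim_span[of "{v}"] finrank_ideal_iff by simp
  moreover have "P v \<noteq> 0" using P(3)[OF span_base] v by simp
  ultimately show ?thesis by auto
qed

subsection \<open>Ideals of the endomorphism ring\<close>

lemma ideal_End_ring_sandwich:
  assumes I: "ideal I (End_ring scale)" and r: "r \<in> I"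
    and a: "linear_endo scale a" and b: "linear_endo scale b"
  shows "a \<circ> r \<circ> b \<in> I"
proof -
  have "a \<circ> r \<in> I" using ideal.I_l_closed[OF I r, of a] a by simp
  then show ?thesis using ideal.I_r_closed[OF I _, of "a \<circ> r" b] b by simp
qed

lemma ideal_End_ring_add:
  assumes I: "ideal I (End_ring scale)" and "f \<in> I" "g \<in> I"
  shows "(\<lambda>x. f x + g x) \<in> I"
  using additive_subgroup.a_closed[OF ideal.axioms(1)[OF I] assms(2,3)] by simp

lemma ideal_End_ring_zero: "ideal I (End_ring scale) \<Longrightarrow> (\<lambda>x. 0) \<in> I"
  using additive_subgroup.zero_closed[OF ideal.axioms(1)] by fastforce

text \<open>A nonzero \<open>r\<close> can be sandwiched into any map of rank at most one: send a vector
  \<open>w = r v \<noteq> 0\<close> to the line, and feed \<open>r\<close> with the matching multiples of \<open>v\<close>.\<close>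

lemma rank_one_in_ideal:
  assumes I: "ideal I (End_ring scale)" and r: "r \<in> I" "r \<noteq> (\<lambda>x. 0)"
    and c: "linear_endo scale c" "range c \<subseteq> span {d}"
  shows "c \<in> I"
proof -
  have r_lin: "linear_endo scale r" using r(1) ideal.Icarr[OF I] by fastforce
  obtain v where v: "r v \<noteq> 0" using r(2) by auto
  define w where "w = r v"
  have w: "independent {w}" using v by (simp add: w_def)
  define \<alpha> where "\<alpha> = endo.construct {w} (\<lambda>_. d)"
  have \<alpha>: "linear_endo scale \<alpha>" "\<alpha> w = d"
    unfolding \<alpha>_def using endo.linear_construct[OF w] endo.construct_basis[OF w, of w] by simp_all
  obtain E where E: "independent E" "UNIV \<subseteq> span E" using maximal_independent_subset[of UNIV] by blast
  have "\<forall>e. \<exists>k. c e = scale k d" using c(2) by (auto simp: span_singleton)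
  then obtain k where k: "\<And>e. c e = scale (k e) d" by metis
  define \<beta> where "\<beta> = endo.construct E (\<lambda>e. scale (k e) v)"
  have \<beta>: "linear_endo scale \<beta>" "\<And>e. e \<in> E \<Longrightarrow> \<beta> e = scale (k e) v"
    unfolding \<beta>_def using endo.linear_construct[OF E(1)] endo.construct_basis[OF E(1)] by simp_all
  have "(\<alpha> \<circ> r \<circ> \<beta>) x = c x" for x
  proof (rule endo.linear_eq_on[of _ _ x E])
    show "linear_endo scale (\<alpha> \<circ> r \<circ> \<beta>)" using \<alpha>(1) r_lin \<beta>(1) by (simp add: linear_endo_comp)
    show "(\<alpha> \<circ> r \<circ> \<beta>) e = c e" if "e \<in> E" for e
      using that \<beta>(2) k \<alpha> endo.linear_scale[OF r_lin] endo.linear_scale[OF \<alpha>(1)] by (simp add: w_def)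
  qed (use c(1) E(2) in auto)
  then have "\<alpha> \<circ> r \<circ> \<beta> = c" by auto
  then show ?thesis using ideal_End_ring_sandwich[OF I r(1) \<alpha>(1) \<beta>(1)] by simp
qed

lemma ideal_contains_maps_into_span:
  assumes I: "ideal I (End_ring scale)" and r: "r \<in> I" "r \<noteq> (\<lambda>x. 0)"
    and B: "finite B" "independent B"
  shows "linear_endo scale c \<Longrightarrow> range c \<subseteq> span B \<Longrightarrow> c \<in> I"
  using B
proof (induction B arbitrary: c rule: finite_induct)
  case empty
  then have "c = (\<lambda>x. 0)" by (auto simp: fun_eq_iff)
  then show ?case using ideal_End_ring_zero[OF I] by simp
next
  case (insert d B)
  have B: "independent B" using insert.prems(3) insert.hyps(2) by (simp add: independent_insert)
  \<comment> \<open>split \<open>c\<close> along the projection \<open>\<pi>\<close> onto the line through \<open>d\<close> that kills \<open>B\<close>\<close>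
  define \<pi> where "\<pi> = endo.construct (insert d B) (\<lambda>b. if b = d then d else 0)"
  have \<pi>: "linear_endo scale \<pi>" "\<pi> d = d" "\<And>b. b \<in> B \<Longrightarrow> \<pi> b = 0"
    unfolding \<pi>_def using endo.linear_construct[OF insert.prems(3)]
      endo.construct_basis[OF insert.prems(3)] insert.hyps(2) by auto
  have "range \<pi> = span ((\<lambda>b. if b = d then d else 0) ` insert d B)"
    unfolding \<pi>_def by (rule endo.range_construct_eq_span[OF insert.prems(3)])
  also have "\<dots> \<subseteq> span (insert 0 {d})" by (rule span_mono) auto
  finally have range_\<pi>: "range \<pi> \<subseteq> span {d}" by simp
  define \<rho> where "\<rho> = (\<lambda>x. x - \<pi> x)"
  have \<rho>: "linear_endo scale \<rho>" unfolding \<rho>_def by (rule linear_endo_diff[OF linear_endo_ident \<pi>(1)])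
  have "\<rho> ` span (insert d B) = span (\<rho> ` insert d B)"
    by (rule endo.linear_span_image[OF \<rho>, symmetric])
  also have "\<dots> \<subseteq> span (insert 0 B)" using \<pi>(2,3) by (intro span_mono) (auto simp: \<rho>_def)
  finally have range_\<rho>: "\<rho> ` span (insert d B) \<subseteq> span B" by simp
  have \<pi>_c: "\<pi> \<circ> c \<in> I"
    using rank_one_in_ideal[OF I r linear_endo_comp[OF \<pi>(1) insert.prems(1)]] range_\<pi> by auto
  have "range (\<rho> \<circ> c) \<subseteq> span B"
    unfolding image_comp[symmetric] using range_\<rho> image_mono[OF insert.prems(2), of \<rho>] by blast
  then have \<rho>_c: "\<rho> \<circ> c \<in> I" using insert.IH[OF linear_endo_comp[OF \<rho> insert.prems(1)] _ B] by blast
  have "c = (\<lambda>x. (\<rho> \<circ> c) x + (\<pi> \<circ> c) x)" by (simp add: \<rho>_def)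
  then show ?case using ideal_End_ring_add[OF I \<rho>_c \<pi>_c] by simp
qed

lemma finrank_ideal_subset_ideal:
  assumes I: "ideal I (End_ring scale)" and nonzero: "I \<noteq> {\<lambda>x. 0}"
  shows "finrank_ideal scale \<subseteq> I"
proof
  obtain r where r: "r \<in> I" "r \<noteq> (\<lambda>x. 0)" using nonzero ideal_End_ring_zero[OF I] by blast
  fix c assume "c \<in> finrank_ideal scale"
  then have c: "linear_endo scale c" "fin_dim scale (range c)" by (simp_all add: finrank_ideal_iff)
  obtain B where B: "B \<subseteq> range c" "independent B" "range c \<subseteq> span B"
    using maximal_independent_subset[of "range c"] by blast
  have "finite B" using finite_independent_in_fin_dim[OF c(2) B(1,2)] .
  then show "c \<in> I" using ideal_contains_maps_into_span[OF I r _ B(2) c(1) B(3)] by blast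
qed

text \<open>With a countable basis \<open>B\<close>, a map of infinite rank has a copy of \<open>B\<close> among the
  independent vectors of its range; mapping \<open>B\<close> onto preimages of that copy and the copy
  back onto \<open>B\<close> exhibits the identity as \<open>a \<circ> r \<circ> b\<close>.\<close>

lemma infinite_rank_factors_identity:
  assumes B: "countable B" "independent B" "span B = UNIV"
    and r: "linear_endo scale r" "\<not> fin_dim scale (range r)"
  obtains a b where "linear_endo scale a" "linear_endo scale b" "a \<circ> r \<circ> b = (\<lambda>x. x)"
proof -
  obtain D where D: "D \<subseteq> range r" "independent D" "range r \<subseteq> span D"
    using maximal_independent_subset[of "range r"] by blast
  have "infinite D"
  proof
    assume "finite D"
    moreover have "span D = range r" using D span_minimal[OF D(1) subspace_range[OF r(1)]] by blast
    ultimately show False using r(2) unfolding fin_dim_def by blast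
  qed
  then obtain f :: "nat \<Rightarrow> 'b" where f: "inj f" "range f \<subseteq> D"
    using infinite_countable_subset by blast
  obtain e :: "'b \<Rightarrow> nat" where e: "inj_on e B" using countableE[OF B(1)] by blast
  define g where "g = f \<circ> e"
  have g_inj: "inj_on g B" unfolding g_def using e f(1) by (simp add: comp_inj_on inj_on_subset)
  have g_D: "g ` B \<subseteq> D" using f(2) unfolding g_def by auto
  define u where "u b = inv_into UNIV r (g b)" for b
  have u: "r (u b) = g b" if "b \<in> B" for b
    unfolding u_def using that g_D D(1) by (intro f_inv_into_f) blast
  define \<beta> where "\<beta> = endo.construct B u"
  have \<beta>: "linear_endo scale \<beta>" "\<And>b. b \<in> B \<Longrightarrow> \<beta> b = u b"
    unfolding \<beta>_def using endo.linear_construct[OF B(2)] endo.construct_basis[OF B(2)] by simp_all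
  have gB: "independent (g ` B)" using independent_mono[OF D(2) g_D] .
  define \<alpha> where "\<alpha> = endo.construct (g ` B) (the_inv_into B g)"
  have \<alpha>: "linear_endo scale \<alpha>" "\<And>b. b \<in> B \<Longrightarrow> \<alpha> (g b) = b"
    unfolding \<alpha>_def using endo.linear_construct[OF gB] endo.construct_basis[OF gB]
      the_inv_into_f_f[OF g_inj] by simp_all
  have "(\<alpha> \<circ> r \<circ> \<beta>) x = x" for x
  proof (rule endo.linear_eq_on[of _ "\<lambda>x. x" x B])
    show "linear_endo scale (\<alpha> \<circ> r \<circ> \<beta>)" using \<alpha>(1) r(1) \<beta>(1) by (simp add: linear_endo_comp)
  qed (use B(3) linear_endo_ident \<alpha>(2) \<beta>(2) u in auto)
  then show ?thesis using that \<alpha>(1) \<beta>(1) by blast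
qed

lemma proper_ideal_subset_finrank:
  assumes B: "countable B" "independent B" "span B = UNIV"
    and I: "ideal I (End_ring scale)" "(\<lambda>x. x) \<notin> I"
  shows "I \<subseteq> finrank_ideal scale"
proof
  fix r assume r: "r \<in> I"
  then have r_lin: "linear_endo scale r" using ideal.Icarr[OF I(1)] by fastforce
  show "r \<in> finrank_ideal scale"
  proof (rule ccontr)
    assume "r \<notin> finrank_ideal scale"
    then have "\<not> fin_dim scale (range r)" using r_lin finrank_ideal_iff by blast
    then obtain a b where "linear_endo scale a" "linear_endo scale b" "a \<circ> r \<circ> b = (\<lambda>x. x)"
      using infinite_rank_factors_identity[OF B r_lin] by blast
    then show False using ideal_End_ring_sandwich[OF I(1) r] I(2) by metis
  qed
qed

lemma proper_ideals_End_ring: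
  assumes B: "countable B" "independent B" "span B = UNIV"
    and I: "ideal I (End_ring scale)" "(\<lambda>x. x) \<notin> I"
  shows "I = {\<lambda>x. 0} \<or> I = finrank_ideal scale"
  using proper_ideal_subset_finrank[OF B I] finrank_ideal_subset_ideal[OF I(1)] by blast

subsection \<open>Fredholm maps\<close>

lemma fin_codim_kernel:
  assumes c: "linear_endo scale c" "fin_dim scale (range c)"
  shows "fin_codim scale {x. c x = 0}"
proof -
  obtain D where D: "finite D" "span D = range c" using c(2) unfolding fin_dim_def by blast
  define U where "U = inv_into UNIV c ` D"
  have "c (inv_into UNIV c d) = d" if "d \<in> D" for d
    using that D(2) span_superset[of D] by (intro f_inv_into_f) blast
  then have "c ` U = (\<lambda>d. d) ` D" unfolding U_def image_image by (rule image_cong[OF refl])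
  then have span_D: "span D = c ` span U" using endo.linear_span_image[OF c(1), of U] by simp
  have "x \<in> span ({x. c x = 0} \<union> U)" for x
  proof -
    have "c x \<in> span D" using D(2) by simp
    then obtain v where v: "v \<in> span U" "c x = c v" using span_D by auto
    then have "c (x - v) = 0" using endo.linear_diff[OF c(1)] by simp
    then have "x - v \<in> span ({x. c x = 0} \<union> U)" by (auto intro: span_base)
    moreover have "v \<in> span ({x. c x = 0} \<union> U)" using v(1) span_mono[of U] by blast
    ultimately have "(x - v) + v \<in> span ({x. c x = 0} \<union> U)" by (rule span_add)
    then show ?thesis by simp
  qed
  then show ?thesis unfolding fin_codim_def U_def using D(1) by blast
qed

lemma complement_of_projection_finrank:
  assumes W: "fin_codim scale W"
    and P: "linear_endo scale P" "range P = W" "\<And>x. x \<in> W \<Longrightarrow> P x = x"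
  shows "(\<lambda>x. x - P x) \<in> finrank_ideal scale"
proof -
  obtain B where B: "finite B" "span (W \<union> B) = UNIV" using W unfolding fin_codim_def by blast
  define \<rho> where "\<rho> = (\<lambda>x. x - P x)"
  have \<rho>: "linear_endo scale \<rho>" unfolding \<rho>_def by (rule linear_endo_diff[OF linear_endo_ident P(1)])
  have "range \<rho> = span (\<rho> ` (W \<union> B))" using endo.linear_span_image[OF \<rho>, of "W \<union> B"] B(2) by simp
  also have "\<dots> \<subseteq> span (\<rho> ` B)"
  proof (rule span_minimal[OF _ subspace_span], rule subsetI)
    fix y assume "y \<in> \<rho> ` (W \<union> B)"
    then obtain x where x: "x \<in> W \<union> B" "y = \<rho> x" by blast
    show "y \<in> span (\<rho> ` B)"
    proof (cases "x \<in> W")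
      case True
      then have "y = 0" using x(2) P(3) by (simp add: \<rho>_def)
      then show ?thesis by (simp add: span_zero)
    next
      case False
      then have "y \<in> \<rho> ` B" using x by blast
      then show ?thesis by (rule span_base)
    qed
  qed
  finally have "fin_dim scale (range \<rho>)"
    using fin_dim_subspace[OF fin_dim_span subspace_range[OF \<rho>]] B(1) by blast
  then show ?thesis using \<rho> unfolding \<rho>_def finrank_ideal_iff by blast
qed

lemma fredholm_set_iff:
  "f \<in> fredholm_set scale \<longleftrightarrow>
    linear_endo scale f \<and> fin_dim scale {x. f x = 0} \<and> fin_codim scale (range f)"
  unfolding fredholm_set_def by simp

text \<open>Undo \<open>f\<close> on its range by choosing preimages, and normalise them by subtracting their
  component in the kernel; the result no longer depends on the choice.\<close>

lemma inverse_modulo_projections: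
  assumes f: "linear_endo scale f"
    and P: "linear_endo scale P" "range P = {x. f x = 0}" "\<And>x. x \<in> {x. f x = 0} \<Longrightarrow> P x = x"
    and Q: "linear_endo scale Q" "range Q = range f" "\<And>x. x \<in> range f \<Longrightarrow> Q x = x"
  obtains g where "linear_endo scale g" "\<And>x. g (f x) = x - P x" "\<And>y. f (g y) = Q y"
proof -
  define i where "i y = inv_into UNIV f (Q y)" for y
  have fi: "f (i y) = Q y" for y
    unfolding i_def using Q(2) by (intro f_inv_into_f) blast
  have normal_form: "x - P x = x' - P x'" if "f x = f x'" for x x'
  proof -
    have "f (x - x') = 0" using that endo.linear_diff[OF f] by simp
    then have "P (x - x') = x - x'" using P(3) by simp
    then show ?thesis using endo.linear_diff[OF P(1)] by (simp add: algebra_simps)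
  qed
  define g where "g y = i y - P (i y)" for y
  have "g (y1 + y2) = g y1 + g y2" for y1 y2
  proof -
    have "f (i (y1 + y2)) = f (i y1 + i y2)"
      using fi endo.linear_add[OF f] endo.linear_add[OF Q(1)] by simp
    then have "g (y1 + y2) = (i y1 + i y2) - P (i y1 + i y2)" unfolding g_def by (rule normal_form)
    then show ?thesis using endo.linear_add[OF P(1)] by (simp add: g_def algebra_simps)
  qed
  moreover have "g (scale c y) = scale c (g y)" for c y
  proof -
    have "f (i (scale c y)) = f (scale c (i y))"
      using fi endo.linear_scale[OF f] endo.linear_scale[OF Q(1)] by simp
    then have "g (scale c y) = scale c (i y) - P (scale c (i y))" unfolding g_def by (rule normal_form)
    then show ?thesis using endo.linear_scale[OF P(1)] by (simp add: g_def scale_right_diff_distrib)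
  qed
  ultimately have "linear_endo scale g" by (simp add: Vector_Spaces.linear_iff vector_space_axioms)
  moreover have "g (f x) = x - P x" for x
    using fi Q(3) normal_form[of "i (f x)" x] by (simp add: g_def)
  moreover have "f (g y) = Q y" for y
  proof -
    have "f (P (i y)) = 0" using P(2) by auto
    then show ?thesis unfolding g_def using endo.linear_diff[OF f] fi by simp
  qed
  ultimately show ?thesis using that by blast
qed

lemma fredholm_pseudo_inverse:
  assumes "f \<in> fredholm_set scale"
  obtains g where "linear_endo scale g"
    "(\<lambda>x. g (f x) - x) \<in> finrank_ideal scale" "(\<lambda>x. f (g x) - x) \<in> finrank_ideal scale"
proof -
  have f: "linear_endo scale f" "fin_dim scale {x. f x = 0}" "fin_codim scale (range f)"
    using assms unfolding fredholm_set_iff by auto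
  obtain P where P: "linear_endo scale P" "range P = {x. f x = 0}" "\<And>x. x \<in> {x. f x = 0} \<Longrightarrow> P x = x"
    using exists_projection[OF subspace_kernel[OF f(1)]] by blast
  obtain Q where Q: "linear_endo scale Q" "range Q = range f" "\<And>x. x \<in> range f \<Longrightarrow> Q x = x"
    using exists_projection[OF subspace_range[OF f(1)]] by blast
  obtain g where g: "linear_endo scale g" "\<And>x. g (f x) = x - P x" "\<And>y. f (g y) = Q y"
    using inverse_modulo_projections[OF f(1) P Q] by blast
  have "P \<in> finrank_ideal scale" using P(1,2) f(2) finrank_ideal_iff by simp
  moreover have "(\<lambda>y. y - Q y) \<in> finrank_ideal scale"
    using complement_of_projection_finrank[OF f(3) Q] .
  ultimately show ?thesis using that[OF g(1)] g(2,3) finrank_neg[of P] finrank_neg[of "\<lambda>y. y - Q y"] by simp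
qed

lemma finrank_left_annihilator:
  assumes c: "c \<in> finrank_ideal scale"
  obtains t where "linear_endo scale t" "(\<lambda>x. t x - x) \<in> finrank_ideal scale" "t \<circ> c = (\<lambda>x. 0)"
proof -
  have c_lin: "linear_endo scale c" and c_fin: "fin_dim scale (range c)"
    using c unfolding finrank_ideal_iff by auto
  obtain P where P: "linear_endo scale P" "range P = range c" "\<And>x. x \<in> range c \<Longrightarrow> P x = x"
    using exists_projection[OF subspace_range[OF c_lin]] by blast
  have "P \<in> finrank_ideal scale" using P(1,2) c_fin finrank_ideal_iff by simp
  from finrank_neg[OF this] have "(\<lambda>x. (x - P x) - x) \<in> finrank_ideal scale" by simp
  moreover have "(\<lambda>x. x - P x) \<circ> c = (\<lambda>x. 0)" using P(3) by (simp add: fun_eq_iff)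
  ultimately show ?thesis using that linear_endo_diff[OF linear_endo_ident P(1)] by blast
qed

lemma finrank_right_annihilator:
  assumes c: "c \<in> finrank_ideal scale"
  obtains t where "linear_endo scale t" "(\<lambda>x. t x - x) \<in> finrank_ideal scale" "c \<circ> t = (\<lambda>x. 0)"
proof -
  have c_lin: "linear_endo scale c" and c_fin: "fin_dim scale (range c)"
    using c unfolding finrank_ideal_iff by auto
  obtain P where P: "linear_endo scale P" "range P = {x. c x = 0}" "\<And>x. x \<in> {x. c x = 0} \<Longrightarrow> P x = x"
    using exists_projection[OF subspace_kernel[OF c_lin]] by blast
  have "(\<lambda>x. x - P x) \<in> finrank_ideal scale"
    using complement_of_projection_finrank[OF fin_codim_kernel[OF c_lin c_fin] P] .
  from finrank_neg[OF this] have "(\<lambda>x. P x - x) \<in> finrank_ideal scale" by simp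
  moreover have "c \<circ> P = (\<lambda>x. 0)" using P(2) by (auto simp: fun_eq_iff)
  ultimately show ?thesis using that P(1) by blast
qed

lemma fredholm_if_regular_mod_finrank:
  assumes t: "regular_mod (End_ring scale) (finrank_ideal scale) t"
  shows "t \<in> fredholm_set scale"
proof -
  have lin: "linear_endo scale t"
    and left: "\<And>g. linear_endo scale g \<Longrightarrow> t \<circ> g = (\<lambda>x. 0) \<Longrightarrow> g \<in> finrank_ideal scale"
    and right: "\<And>g. linear_endo scale g \<Longrightarrow> g \<circ> t = (\<lambda>x. 0) \<Longrightarrow> g \<in> finrank_ideal scale"
    using t unfolding regular_mod_def by auto
  obtain P where P: "linear_endo scale P" "range P = {x. t x = 0}" "\<And>x. x \<in> {x. t x = 0} \<Longrightarrow> P x = x"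
    using exists_projection[OF subspace_kernel[OF lin]] by blast
  have "t \<circ> P = (\<lambda>x. 0)" using P(2) by (auto simp: fun_eq_iff)
  then have kernel: "fin_dim scale {x. t x = 0}" using left[OF P(1)] P(2) finrank_ideal_iff by simp
  obtain Q where Q: "linear_endo scale Q" "range Q = range t" "\<And>x. x \<in> range t \<Longrightarrow> Q x = x"
    using exists_projection[OF subspace_range[OF lin]] by blast
  have "(\<lambda>x. x - Q x) \<circ> t = (\<lambda>x. 0)" using Q(3) by (simp add: fun_eq_iff)
  then have "(\<lambda>x. x - Q x) \<in> finrank_ideal scale"
    using right[OF linear_endo_diff[OF linear_endo_ident Q(1)]] by simp
  then obtain B where B: "finite B" "span B = range (\<lambda>x. x - Q x)"
    unfolding finrank_ideal_iff fin_dim_def by blast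
  have "x \<in> span (range t \<union> B)" for x
  proof -
    have "Q x \<in> range t" unfolding Q(2)[symmetric] by (rule rangeI)
    then have "Q x \<in> span (range t \<union> B)" by (simp add: span_base)
    moreover have "x - Q x \<in> span B" unfolding B(2) by (rule rangeI)
    then have "x - Q x \<in> span (range t \<union> B)" using span_mono[of B "range t \<union> B"] by blast
    ultimately have "Q x + (x - Q x) \<in> span (range t \<union> B)" by (rule span_add)
    then show ?thesis by simp
  qed
  then have cokernel: "fin_codim scale (range t)" unfolding fin_codim_def using B(1) by blast
  show ?thesis using lin kernel cokernel unfolding fredholm_set_iff by blast
qed

lemma Aut_if_regular_mod_zero:
  assumes t: "regular_mod (End_ring scale) {\<lambda>x. 0} t"
  shows "t \<in> Aut scale"
proof -
  have lin: "linear_endo scale t"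
    and left: "\<And>g. linear_endo scale g \<Longrightarrow> t \<circ> g = (\<lambda>x. 0) \<Longrightarrow> g = (\<lambda>x. 0)"
    and right: "\<And>g. linear_endo scale g \<Longrightarrow> g \<circ> t = (\<lambda>x. 0) \<Longrightarrow> g = (\<lambda>x. 0)"
    using t unfolding regular_mod_def by auto
  obtain P where P: "linear_endo scale P" "range P = {x. t x = 0}" "\<And>x. x \<in> {x. t x = 0} \<Longrightarrow> P x = x"
    using exists_projection[OF subspace_kernel[OF lin]] by blast
  have "t \<circ> P = (\<lambda>x. 0)" using P(2) by (auto simp: fun_eq_iff)
  then have "P = (\<lambda>x. 0)" using left[OF P(1)] by simp
  then have inj: "inj t" using P(3) endo.linear_inj_iff_eq_0[OF lin] by auto
  obtain Q where Q: "linear_endo scale Q" "range Q = range t" "\<And>x. x \<in> range t \<Longrightarrow> Q x = x"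
    using exists_projection[OF subspace_range[OF lin]] by blast
  have "(\<lambda>x. x - Q x) \<circ> t = (\<lambda>x. 0)" using Q(3) by (simp add: fun_eq_iff)
  then have "(\<lambda>x. x - Q x) = (\<lambda>x. 0)" using right[OF linear_endo_diff[OF linear_endo_ident Q(1)]] by simp
  then have "x \<in> range t" for x using Q(2) by (metis eq_iff_diff_eq_0 rangeI)
  then have surj: "surj t" by blast
  show ?thesis using lin inj surj unfolding Aut_def bij_def by blast
qed

lemma fredholm_if_identity_mod_finrank:
  assumes t: "linear_endo scale t" "(\<lambda>x. t x - x) \<in> finrank_ideal scale"
  shows "t \<in> fredholm_set scale"
proof (rule fredholm_if_regular_mod_finrank)
  have "g \<in> finrank_ideal scale" if g: "linear_endo scale g" "t \<circ> g = (\<lambda>x. 0)" for g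
  proof -
    have "(\<lambda>x. - ((\<lambda>x. t x - x) \<circ> g) x) = g" using g(2) by (simp add: fun_eq_iff)
    then show ?thesis using finrank_neg[OF finrank_comp_right[OF t(2) g(1)]] by simp
  qed
  moreover have "g \<in> finrank_ideal scale" if g: "linear_endo scale g" "g \<circ> t = (\<lambda>x. 0)" for g
  proof -
    have "(\<lambda>x. - (g \<circ> (\<lambda>x. t x - x)) x) = g"
      using g(2) endo.linear_diff[OF g(1)] by (simp add: fun_eq_iff)
    then show ?thesis using finrank_neg[OF finrank_comp_left[OF t(2) g(1)]] by simp
  qed
  ultimately show "regular_mod (End_ring scale) (finrank_ideal scale) t"
    using t(1) unfolding regular_mod_def by simp
qed

subsection \<open>Denominator sets of the endomorphism ring\<close>

lemma End_ring_nontrivial: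
  assumes "\<not> fin_dim scale UNIV"
  shows "\<one>\<^bsub>End_ring scale\<^esub> \<noteq> \<zero>\<^bsub>End_ring scale\<^esub>"
proof -
  obtain v :: 'b where "v \<noteq> 0" using exists_nonzero_if_not_fin_dim[OF assms] .
  then show ?thesis by (auto simp: fun_eq_iff)
qed

lemma denominator_sets_End_ring_zero:
  assumes "\<not> fin_dim scale UNIV"
  shows "{\<lambda>x. 0} \<in> Ass_l (End_ring scale) \<and> {\<lambda>x. 0} \<in> Ass_r (End_ring scale) \<and>
    {\<lambda>x. 0} \<in> Ass (End_ring scale) \<and> S_l (End_ring scale) {\<lambda>x. 0} = Aut scale \<and>
    S_r (End_ring scale) {\<lambda>x. 0} = Aut scale \<and> S_d (End_ring scale) {\<lambda>x. 0} = Aut scale \<and>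
    left_localization (End_ring scale) (Aut scale) (End_ring scale) (\<lambda>x. x) \<and>
    right_localization (End_ring scale) (Aut scale) (End_ring scale) (\<lambda>x. x)"
  using ring.largest_denominator_sets_at_zero[OF ring_End_ring End_ring_nontrivial[OF assms]]
    Aut_if_regular_mod_zero Units_End_ring
  by simp

lemma finrank_quotient_hom:
  "ring_hom_ring (End_ring scale) (End_ring scale Quot finrank_ideal scale)
     ((+>\<^bsub>End_ring scale\<^esub>) (finrank_ideal scale))"
  by (rule ideal.rcos_ring_hom_ring[OF ideal_finrank_ideal])

lemma fredholm_set_units_preimage:
  "fredholm_set scale = {s \<in> carrier (End_ring scale).
     finrank_ideal scale +>\<^bsub>End_ring scale\<^esub> s \<in> Units (End_ring scale Quot finrank_ideal scale)}"
    (is "_ = {s \<in> carrier ?R. ?h s \<in> Units ?Q}")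
proof (intro equalityI subsetI CollectI conjI)
  interpret h: ring_hom_ring ?R ?Q ?h by (rule finrank_quotient_hom)
  have kernel: "a_kernel ?R ?Q ?h = finrank_ideal scale" by (rule ideal.rcos_kernel[OF ideal_finrank_ideal])
  fix f assume f: "f \<in> fredholm_set scale"
  then show lin: "f \<in> carrier ?R" unfolding fredholm_set_iff by simp
  obtain g where g: "linear_endo scale g"
    "(\<lambda>x. g (f x) - x) \<in> finrank_ideal scale" "(\<lambda>x. f (g x) - x) \<in> finrank_ideal scale"
    using fredholm_pseudo_inverse[OF f] by blast
  have one: "?h (\<lambda>x. x) = \<one>\<^bsub>?Q\<^esub>" using h.hom_one by simp
  have "?h a = \<one>\<^bsub>?Q\<^esub>" if "linear_endo scale a" "(\<lambda>x. a x - x) \<in> finrank_ideal scale" for a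
  proof -
    have "a \<ominus>\<^bsub>?R\<^esub> \<one>\<^bsub>?R\<^esub> \<in> a_kernel ?R ?Q ?h"
      using that End_ring_minus[OF that(1) linear_endo_ident] kernel by simp
    then show ?thesis using h.hom_eq_if_diff_in_kernel[of a "\<one>\<^bsub>?R\<^esub>"] that(1) linear_endo_ident one by simp
  qed
  then have "?h g \<otimes>\<^bsub>?Q\<^esub> ?h f = \<one>\<^bsub>?Q\<^esub>" "?h f \<otimes>\<^bsub>?Q\<^esub> ?h g = \<one>\<^bsub>?Q\<^esub>"
    using g lin h.hom_mult[of g f] h.hom_mult[of f g] linear_endo_comp[OF g(1)] linear_endo_comp[of f g]
    by (simp_all add: comp_def)
  then show "?h f \<in> Units ?Q" using g(1) lin unfolding Units_def by auto
next
  interpret h: ring_hom_ring ?R ?Q ?h by (rule finrank_quotient_hom)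
  have kernel: "a_kernel ?R ?Q ?h = finrank_ideal scale" by (rule ideal.rcos_kernel[OF ideal_finrank_ideal])
  fix f assume "f \<in> {s \<in> carrier ?R. ?h s \<in> Units ?Q}"
  then show "f \<in> fredholm_set scale"
    using h.units_preimage_regular_mod fredholm_if_regular_mod_finrank kernel by simp
qed

lemma denominator_sets_End_ring_finrank:
  assumes "\<not> fin_dim scale UNIV"
  shows "finrank_ideal scale \<in> Ass_l (End_ring scale) \<and> finrank_ideal scale \<in> Ass_r (End_ring scale) \<and>
    finrank_ideal scale \<in> Ass (End_ring scale) \<and>
    S_l (End_ring scale) (finrank_ideal scale) = fredholm_set scale \<and>
    S_r (End_ring scale) (finrank_ideal scale) = fredholm_set scale \<and>
    S_d (End_ring scale) (finrank_ideal scale) = fredholm_set scale \<and>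
    left_localization (End_ring scale) (fredholm_set scale) (End_ring scale Quot finrank_ideal scale)
      ((+>\<^bsub>End_ring scale\<^esub>) (finrank_ideal scale)) \<and>
    right_localization (End_ring scale) (fredholm_set scale) (End_ring scale Quot finrank_ideal scale)
      ((+>\<^bsub>End_ring scale\<^esub>) (finrank_ideal scale))"
proof -
  let ?R = "End_ring scale" and ?Q = "End_ring scale Quot finrank_ideal scale"
    and ?h = "(+>\<^bsub>End_ring scale\<^esub>) (finrank_ideal scale)"
  have kernel: "a_kernel ?R ?Q ?h = finrank_ideal scale" by (rule ideal.rcos_kernel[OF ideal_finrank_ideal])
  have surj: "?h ` carrier ?R = carrier ?Q" by (rule ideal.rcos_surj[OF ideal_finrank_ideal])
  have nontrivial: "\<one>\<^bsub>?Q\<^esub> \<noteq> \<zero>\<^bsub>?Q\<^esub>"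
    using ideal.quotient_nontrivial[OF ideal_finrank_ideal] one_notin_finrank_ideal[OF assms] by simp
  have left: "\<exists>t\<in>fredholm_set scale. t \<otimes>\<^bsub>?R\<^esub> c = \<zero>\<^bsub>?R\<^esub>" if "c \<in> a_kernel ?R ?Q ?h" for c
  proof -
    have c: "c \<in> finrank_ideal scale" using that kernel by simp
    obtain t where "linear_endo scale t" "(\<lambda>x. t x - x) \<in> finrank_ideal scale" "t \<circ> c = (\<lambda>x. 0)"
      using finrank_left_annihilator[OF c] by blast
    then show ?thesis using fredholm_if_identity_mod_finrank by auto
  qed
  have right: "\<exists>t\<in>fredholm_set scale. c \<otimes>\<^bsub>?R\<^esub> t = \<zero>\<^bsub>?R\<^esub>" if "c \<in> a_kernel ?R ?Q ?h" for c
  proof -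
    have c: "c \<in> finrank_ideal scale" using that kernel by simp
    obtain t where "linear_endo scale t" "(\<lambda>x. t x - x) \<in> finrank_ideal scale" "c \<circ> t = (\<lambda>x. 0)"
      using finrank_right_annihilator[OF c] by blast
    then show ?thesis using fredholm_if_identity_mod_finrank by auto
  qed
  have regular: "t \<in> fredholm_set scale" if "regular_mod ?R (a_kernel ?R ?Q ?h) t" for t
    using that fredholm_if_regular_mod_finrank kernel by simp
  from ring_hom_ring.largest_denominator_sets_at_kernel[OF finrank_quotient_hom
      fredholm_set_units_preimage surj nontrivial left right regular]
  show ?thesis unfolding kernel .
qed

lemma localization_maximal_finrank_quotient:
  assumes B: "countable B" "independent B" "span B = UNIV" and infinite: "\<not> fin_dim scale UNIV"
  shows "loc_max (End_ring scale Quot finrank_ideal scale) \<and>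
    left_loc_max (End_ring scale Quot finrank_ideal scale) \<and>
    right_loc_max (End_ring scale Quot finrank_ideal scale)"
proof -
  let ?R = "End_ring scale" and ?Q = "End_ring scale Quot finrank_ideal scale"
    and ?h = "(+>\<^bsub>End_ring scale\<^esub>) (finrank_ideal scale)"
  interpret h: ring_hom_ring ?R ?Q ?h by (rule finrank_quotient_hom)
  have kernel: "a_kernel ?R ?Q ?h = finrank_ideal scale" by (rule ideal.rcos_kernel[OF ideal_finrank_ideal])
  have surj: "?h ` carrier ?R = carrier ?Q" by (rule ideal.rcos_surj[OF ideal_finrank_ideal])
  have nontrivial: "\<one>\<^bsub>?Q\<^esub> \<noteq> \<zero>\<^bsub>?Q\<^esub>"
    using ideal.quotient_nontrivial[OF ideal_finrank_ideal] one_notin_finrank_ideal[OF infinite] by simp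
  have "t \<in> Units ?Q" if t: "regular_mod ?Q {\<zero>\<^bsub>?Q\<^esub>} t" for t
  proof -
    have "t \<in> ?h ` carrier ?R" using t surj unfolding regular_mod_def by simp
    then obtain f where f: "f \<in> carrier ?R" "t = ?h f" by blast
    then have "f \<in> fredholm_set scale"
      using h.regular_mod_kernel[OF f(1)] t fredholm_if_regular_mod_finrank kernel by simp
    then show ?thesis using f(2) fredholm_set_units_preimage by blast
  qed
  moreover have "\<exists>a\<in>carrier ?R. \<exists>b\<in>carrier ?R. a \<otimes>\<^bsub>?R\<^esub> r \<otimes>\<^bsub>?R\<^esub> b = \<one>\<^bsub>?R\<^esub>"
    if r: "r \<in> carrier ?R" "r \<notin> a_kernel ?R ?Q ?h" for r
  proof -
    have "\<not> fin_dim scale (range r)" using r kernel finrank_ideal_iff by simp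
    then obtain a b where "linear_endo scale a" "linear_endo scale b" "a \<circ> r \<circ> b = (\<lambda>x. x)"
      using infinite_rank_factors_identity[OF B] r(1) by auto
    then have "a \<in> carrier ?R" "b \<in> carrier ?R" "a \<otimes>\<^bsub>?R\<^esub> r \<otimes>\<^bsub>?R\<^esub> b = \<one>\<^bsub>?R\<^esub>" by simp_all
    then show ?thesis by blast
  qed
  then have "J = {\<zero>\<^bsub>?Q\<^esub>}" if "ideal J ?Q" "\<one>\<^bsub>?Q\<^esub> \<notin> J" for J
    using h.image_proper_ideal_trivial[OF surj _ that] by blast
  ultimately show ?thesis
    by (rule ring.localization_maximal_if_simple[OF ideal.quotient_is_ring[OF ideal_finrank_ideal] nontrivial])
qed

lemma Ass_End_ring:
  assumes B: "countable B" "independent B" "span B = UNIV" and infinite: "\<not> fin_dim scale UNIV"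
  shows "Ass_l (End_ring scale) = {{\<lambda>x. 0}, finrank_ideal scale} \<and>
    Ass_r (End_ring scale) = {{\<lambda>x. 0}, finrank_ideal scale} \<and>
    Ass (End_ring scale) = {{\<lambda>x. 0}, finrank_ideal scale}"
proof -
  have proper: "I \<in> {{\<lambda>x. 0}, finrank_ideal scale}"
    if "ideal I (End_ring scale) \<and> \<one>\<^bsub>End_ring scale\<^esub> \<notin> I" for I
    using proper_ideals_End_ring[OF B] that by simp
  have members: "{{\<lambda>x. 0}, finrank_ideal scale} \<subseteq> Ass_l (End_ring scale)"
    "{{\<lambda>x. 0}, finrank_ideal scale} \<subseteq> Ass_r (End_ring scale)"
    "{{\<lambda>x. 0}, finrank_ideal scale} \<subseteq> Ass (End_ring scale)"
    using denominator_sets_End_ring_zero[OF infinite] denominator_sets_End_ring_finrank[OF infinite]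
    by simp_all
  have "Ass_l (End_ring scale) \<subseteq> {{\<lambda>x. 0}, finrank_ideal scale}"
    using ring.Ass_l_proper_ideal[OF ring_End_ring] proper by blast
  moreover have "Ass_r (End_ring scale) \<subseteq> {{\<lambda>x. 0}, finrank_ideal scale}"
    using ring.Ass_r_proper_ideal[OF ring_End_ring] proper by blast
  moreover have "Ass (End_ring scale) \<subseteq> {{\<lambda>x. 0}, finrank_ideal scale}"
    using ring.Ass_proper_ideal[OF ring_End_ring] proper by blast
  ultimately show ?thesis using members by blast
qed

end

theorem theorem5p2:
  fixes scale :: "'k::field \<Rightarrow> 'v::ab_group_add \<Rightarrow> 'v"
  assumes vs: "vector_space scale"
    and basis: "\<exists>B. countable B \<and> infinite B \<and> \<not> module.dependent scale B \<and>
                    module.span scale B = UNIV"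
  shows
   "Ass_l (End_ring scale) = {{\<zero>\<^bsub>End_ring scale\<^esub>}, finrank_ideal scale} \<and>
    Ass_r (End_ring scale) = {{\<zero>\<^bsub>End_ring scale\<^esub>}, finrank_ideal scale} \<and>
    Ass (End_ring scale) = {{\<zero>\<^bsub>End_ring scale\<^esub>}, finrank_ideal scale} \<and>
    \<comment> \<open>(2)\<close>
    S_l (End_ring scale) {\<zero>\<^bsub>End_ring scale\<^esub>} = Aut scale \<and>
    S_r (End_ring scale) {\<zero>\<^bsub>End_ring scale\<^esub>} = Aut scale \<and>
    S_d (End_ring scale) {\<zero>\<^bsub>End_ring scale\<^esub>} = Aut scale \<and>
    left_localization (End_ring scale) (S_l (End_ring scale) {\<zero>\<^bsub>End_ring scale\<^esub>})
       (End_ring scale) (\<lambda>x. x) \<and>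
    right_localization (End_ring scale) (S_r (End_ring scale) {\<zero>\<^bsub>End_ring scale\<^esub>})
       (End_ring scale) (\<lambda>x. x) \<and>
    localization (End_ring scale) (S_d (End_ring scale) {\<zero>\<^bsub>End_ring scale\<^esub>})
       (End_ring scale) (\<lambda>x. x) \<and>
    \<comment> \<open>(3)\<close>
    S_l (End_ring scale) (finrank_ideal scale) = fredholm_set scale \<and>
    S_r (End_ring scale) (finrank_ideal scale) = fredholm_set scale \<and>
    S_d (End_ring scale) (finrank_ideal scale) = fredholm_set scale \<and>
    left_localization (End_ring scale) (S_l (End_ring scale) (finrank_ideal scale))
       (End_ring scale Quot finrank_ideal scale) ((+>\<^bsub>End_ring scale\<^esub>) (finrank_ideal scale)) \<and>
    right_localization (End_ring scale) (S_r (End_ring scale) (finrank_ideal scale))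
       (End_ring scale Quot finrank_ideal scale) ((+>\<^bsub>End_ring scale\<^esub>) (finrank_ideal scale)) \<and>
    localization (End_ring scale) (S_d (End_ring scale) (finrank_ideal scale))
       (End_ring scale Quot finrank_ideal scale) ((+>\<^bsub>End_ring scale\<^esub>) (finrank_ideal scale)) \<and>
    \<comment> \<open>(4)\<close>
    maxAss_l (End_ring scale) = {finrank_ideal scale} \<and>
    maxAss_r (End_ring scale) = {finrank_ideal scale} \<and>
    maxAss (End_ring scale) = {finrank_ideal scale} \<and>
    \<comment> \<open>(5)\<close>
    loc_max (End_ring scale Quot finrank_ideal scale) \<and>
    left_loc_max (End_ring scale Quot finrank_ideal scale) \<and>
    right_loc_max (End_ring scale Quot finrank_ideal scale)"
proof -
  interpret vector_space scale by (rule vs)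
  obtain B where B: "countable B" "infinite B" "independent B" "span B = UNIV"
    using basis by blast
  have infinite: "\<not> fin_dim scale UNIV"
    using finite_independent_in_fin_dim[of UNIV B] B(2,3) by blast
  have maximal: "maximals {{\<lambda>x. 0}, finrank_ideal scale} = {finrank_ideal scale}"
    using finrank_zero finrank_ideal_nonzero[OF infinite] unfolding maximals_def by auto
  show ?thesis
    using Ass_End_ring[OF B(1,3,4) infinite] denominator_sets_End_ring_zero[OF infinite]
      denominator_sets_End_ring_finrank[OF infinite] localization_maximal_finrank_quotient[OF B(1,3,4) infinite]
      maximal
    unfolding maxAss_l_def maxAss_r_def maxAss_def localization_def by simp
qed

end
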